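(* Under the hypotheses of Proposition 1 (i.e. the Lax-Sato equations $\frac{\partial K}{\partial t_{mn}}=\{H_{mn},K\}$ for $K\in\{\mathcal{L},\mathcal{M},\hat{\mathcal{L}},\hat{\mathcal{M}}\}$ and $\{\mathcal{L},\mathcal{M}\}=\{\hat{\mathcal{L}},\hat{\mathcal{M}}\}=1$), for all positive integers $m,n,k,l$, $$\frac{\partial (v_{m+1}+\hat v_{n+1})}{\partial t_{kl}}=\frac{\partial (v_{k+1}+\hat v_{l+1})}{\partial t_{mn}}.$$
   Context: Variables: $t=(t_{mn})$ with $m,n\in\mathbb{N}$, $m+n\ge 1$, $t_{10}\equiv z$, $t_{01}\equiv\hat z$; $p$ is a complex parameter. Poisson bracket: $\{A,B\}=\frac{\partial A}{\partial p}\frac{\partial B}{\partial z}-\frac{\partial A}{\partial z}\frac{\partial B}{\partial p}$. $\mathcal{L}=p+\sum_{i\le 0}f_i(t)p^i$, $\hat{\mathcal{L}}=\frac{u(t)}{p}+\sum_{i\ge 0}g_i(t)p^i$ are formal Laurent series in $p$. $(\cdot)_{>0}$, $(\cdot)_{\le 0}$ denote the parts with positive, resp. non-positive, powers of $p$. $H_{mn}=(\mathcal{L}^m)_{>0}+(\hat{\mathcal{L}}^n)_{\le 0}$. $\mathcal{M}=\sum_{m+n\ge 2}m\,t_{mn}\mathcal{L}^{m-1}+z+\sum_{i=1}^{\infty}v_{i+1}\mathcal{L}^{-i-1}$, $\hat{\mathcal{M}}=\sum_{m+n\ge 2}n\,t_{mn}\hat{\mathcal{L}}^{n-1}+\hat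 z+\sum_{i=1}^{\infty}\hat v_{i+1}\hat{\mathcal{L}}^{-i-1}$. *)

theory Defs
  imports "HOL-Analysis.Analysis"
begin

(* Times t = (t_{mn}); index (1,0) is z, (0,1) is zhat; t(0,0) unused (set to 0).
   We work on finitely supported times, so that all infinite sums occurring in
   M and Mhat have, coefficient-wise, only finitely many nonzero terms. *)
type_synonym times = "nat \<times> nat \<Rightarrow> complex"

definition fin_times :: "times \<Rightarrow> bool" where
  "fin_times t \<longleftrightarrow> finite {q. t q \<noteq> 0} \<and> t (0,0) = 0"

(* formal Laurent series in p, given by its coefficient function: A j = coefficient of p^j *)
type_synonym ser = "int \<Rightarrow> complex"

definition ser_one :: ser where "ser_one j = (if j = 0 then 1 else 0)"
definition ser_const :: "complex \<Rightarrow> ser" where "ser_const c j = (if j = 0 then c else 0)"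
definition ser_add :: "ser \<Rightarrow> ser \<Rightarrow> ser" where "ser_add A B j = A j + B j"
definition ser_sub :: "ser \<Rightarrow> ser \<Rightarrow> ser" where "ser_sub A B j = A j - B j"
definition ser_smul :: "complex \<Rightarrow> ser \<Rightarrow> ser" where "ser_smul c A j = c * A j"

(* Cauchy product; the defining sum is finite whenever the product makes sense
   (e.g. both factors bounded above, or both bounded below, or one a Laurent polynomial) *)
definition ser_mult :: "ser \<Rightarrow> ser \<Rightarrow> ser" where
  "ser_mult A B j = (\<Sum>a | A a \<noteq> 0 \<and> B (j - a) \<noteq> 0. A a * B (j - a))"

primrec ser_pow :: "ser \<Rightarrow> nat \<Rightarrow> ser" where
  "ser_pow A 0 = ser_one"
| "ser_pow A (Suc k) = ser_mult A (ser_pow A k)"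

(* sum of a family of series, coefficient-wise (finitely many nonzero terms per coefficient) *)
definition ser_sum :: "'i set \<Rightarrow> ('i \<Rightarrow> ser) \<Rightarrow> ser" where
  "ser_sum I F j = (\<Sum>x | x \<in> I \<and> F x j \<noteq> 0. F x j)"

definition bdd_above_ser :: "ser \<Rightarrow> bool" where
  "bdd_above_ser A \<longleftrightarrow> (\<exists>N. \<forall>j>N. A j = 0)"
definition bdd_below_ser :: "ser \<Rightarrow> bool" where
  "bdd_below_ser A \<longleftrightarrow> (\<exists>N. \<forall>j<N. A j = 0)"

(* inverse in the field of series bounded above in p (Laurent series in 1/p) *)
definition inv_up :: "ser \<Rightarrow> ser" where
  "inv_up A = (THE B. bdd_above_ser B \<and> ser_mult A B = ser_one)"
(* inverse in the field of series bounded below in p (Laurent series in p) *)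
definition inv_down :: "ser \<Rightarrow> ser" where
  "inv_down A = (THE B. bdd_below_ser B \<and> ser_mult A B = ser_one)"

definition pos_part :: "ser \<Rightarrow> ser" where "pos_part A j = (if j > 0 then A j else 0)"
definition nonpos_part :: "ser \<Rightarrow> ser" where "nonpos_part A j = (if j \<le> 0 then A j else 0)"

definition ser_dp :: "ser \<Rightarrow> ser" where "ser_dp A j = of_int (j + 1) * A (j + 1)"

definition pdt :: "nat \<times> nat \<Rightarrow> (times \<Rightarrow> complex) \<Rightarrow> times \<Rightarrow> complex" where
  "pdt q F t = deriv (\<lambda>s. F (t(q := s))) (t q)"

type_synonym fam = "times \<Rightarrow> ser"

definition fam_pdt :: "nat \<times> nat \<Rightarrow> fam \<Rightarrow> times \<Rightarrow> ser" where
  "fam_pdt q K t j = pdt q (\<lambda>t'. K t' j) t"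

definition pbr :: "fam \<Rightarrow> fam \<Rightarrow> fam" where
  "pbr A B t = ser_sub (ser_mult (ser_dp (A t)) (fam_pdt (1,0) B t))
                       (ser_mult (fam_pdt (1,0) A t) (ser_dp (B t)))"

definition Lser :: "(int \<Rightarrow> times \<Rightarrow> complex) \<Rightarrow> fam" where
  "Lser f t j = (if j = 1 then 1 else if j \<le> 0 then f j t else 0)"

definition Lhser :: "(times \<Rightarrow> complex) \<Rightarrow> (nat \<Rightarrow> times \<Rightarrow> complex) \<Rightarrow> fam" where
  "Lhser u g t j = (if j = -1 then u t else if j \<ge> 0 then g (nat j) t else 0)"

definition Hser :: "fam \<Rightarrow> fam \<Rightarrow> nat \<Rightarrow> nat \<Rightarrow> fam" where
  "Hser L Lh m n t = ser_add (pos_part (ser_pow (L t) m)) (nonpos_part (ser_pow (Lh t) n))"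

definition Mser :: "fam \<Rightarrow> (nat \<Rightarrow> times \<Rightarrow> complex) \<Rightarrow> fam" where
  "Mser L v t = ser_add
     (ser_add (ser_sum {(m,n). m + n \<ge> 2} (\<lambda>(m,n). ser_smul (of_nat m * t (m,n)) (ser_pow (L t) (m - 1))))
              (ser_const (t (1,0))))
     (ser_sum {i. i \<ge> 1} (\<lambda>i. ser_smul (v (i + 1) t) (ser_pow (inv_up (L t)) (i + 1))))"

definition Mhser :: "fam \<Rightarrow> (nat \<Rightarrow> times \<Rightarrow> complex) \<Rightarrow> fam" where
  "Mhser Lh vh t = ser_add
     (ser_add (ser_sum {(m,n). m + n \<ge> 2} (\<lambda>(m,n). ser_smul (of_nat n * t (m,n)) (ser_pow (Lh t) (n - 1))))
              (ser_const (t (0,1))))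
     (ser_sum {i. i \<ge> 1} (\<lambda>i. ser_smul (vh (i + 1) t) (ser_pow (inv_down (Lh t)) (i + 1))))"

definition regular :: "(times \<Rightarrow> complex) \<Rightarrow> bool" where
  "regular F \<longleftrightarrow> (\<forall>t q. fin_times t \<and> fst q + snd q \<ge> 1 \<longrightarrow>
      (\<lambda>s. F (t(q := s))) field_differentiable at (t q))"

definition lax_eq :: "fam \<Rightarrow> fam \<Rightarrow> nat \<Rightarrow> nat \<Rightarrow> bool" where
  "lax_eq H K m n \<longleftrightarrow> (\<forall>t j. fin_times t \<longrightarrow>
      ((\<lambda>s. K (t((m,n) := s)) j) has_field_derivative pbr H K t j) (at (t (m,n))))"

end

(*
  Write res A for the coefficient of p^(-1) in A. Differentiating M = ... + \<Sum> v_(i+1) L^(-i-1) along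
  t_kl and eliminating the derivatives of L and M with the Lax equations and {L, M} = 1 gives
  d v_(m+1) / d t_kl = res (L^m dH_kl/dp), and likewise d vhat_(n+1) / d t_kl = - res (Lhat^n dH_kl/dp).
  Expanding H_kl = (L^k)_+ + (Lhat^l)_<=0, the pure terms res (L^m d(L^k)_+/dp) and
  res (Lhat^n d(Lhat^l)_<=0/dp) are symmetric in (m, k) and (n, l), because res (L^m d(L^k)/dp) = 0 for
  m + k > 0, while the mixed terms satisfy res (L^m d(Lhat^l)_<=0/dp) = - res (Lhat^l d(L^m)_+/dp).
  Both sides of the claim therefore reduce to the same four residues.

  Series in L (finitely many positive powers of p) and in Lhat (finitely many negative ones) are
  treated uniformly as formal Laurent series in p^s, with s = -1 for L and s = 1 for Lhat.
*)

theory Submission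
  imports Defs "HOL-Computational_Algebra.Formal_Laurent_Series"
begin

unbundle fps_syntax

section \<open>Series as formal Laurent series in \<open>p\<close> or \<open>1/p\<close>\<close>

definition unit_sign :: "int \<Rightarrow> bool" where "unit_sign s \<longleftrightarrow> s = 1 \<or> s = -1"

lemma unit_sign_mult_cancel: "unit_sign s \<Longrightarrow> s * (s * j) = j"
  by (auto simp: unit_sign_def)

definition ser_bdd :: "int \<Rightarrow> ser \<Rightarrow> bool" where
  "ser_bdd s A \<longleftrightarrow> (\<exists>N. \<forall>j. s * j < N \<longrightarrow> A j = 0)"

text \<open>Coefficient \<open>j\<close> of \<open>fls_of_ser s A\<close> is the coefficient of \<open>p\<^sup>s\<^sup>j\<close> in \<open>A\<close>;
  this is faithful for series with \<open>ser_bdd s\<close>.\<close>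
definition fls_of_ser :: "int \<Rightarrow> ser \<Rightarrow> complex fls" where
  "fls_of_ser s A = Abs_fls (\<lambda>j. A (s * j))"

lemma fls_of_ser_nth: assumes "unit_sign s" "ser_bdd s A" shows "fls_of_ser s A $$ j = A (s * j)"
proof -
  from assms(2) obtain N where N: "\<forall>j. s * j < N \<longrightarrow> A j = 0" by (auto simp: ser_bdd_def)
  have "\<forall>n<N. A (s * n) = 0" using N unit_sign_mult_cancel[OF assms(1)] by metis
  then show ?thesis unfolding fls_of_ser_def by (rule nth_Abs_fls_lower_bound)
qed

lemma ser_eq_fls_of_ser_nth: assumes "unit_sign s" "ser_bdd s A" shows "A j = fls_of_ser s A $$ (s * j)"
  using fls_of_ser_nth[OF assms, of "s*j"] unit_sign_mult_cancel[OF assms(1)] by simp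

lemma fls_of_ser_inject: assumes "unit_sign s" "ser_bdd s A" "ser_bdd s B" "fls_of_ser s A = fls_of_ser s B" shows "A = B"
  using ser_eq_fls_of_ser_nth[OF assms(1,2)] ser_eq_fls_of_ser_nth[OF assms(1,3)] assms(4) by auto

definition vanishes_below :: "int \<Rightarrow> complex fls \<Rightarrow> bool" where
  "vanishes_below a F \<longleftrightarrow> (\<forall>j<a. F $$ j = 0)"

lemma vanishes_below_mono: "vanishes_below a F \<Longrightarrow> b \<le> a \<Longrightarrow> vanishes_below b F"
  by (auto simp: vanishes_below_def)

lemma fls_times_nth_vanishes_below:
  assumes "vanishes_below a F" "vanishes_below b G"
  shows "(F * G) $$ n = (\<Sum>i=a..n-b. F $$ i * G $$ (n - i))"
proof (cases "F = 0 \<or> G = 0")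
  case True then show ?thesis by auto
next
  case False
  hence nz: "F \<noteq> 0" "G \<noteq> 0" by auto
  have da: "a \<le> fls_subdegree F" using assms(1) nz(1)
    by (intro fls_subdegree_geI) (auto simp: vanishes_below_def)
  have db: "b \<le> fls_subdegree G" using assms(2) nz(2)
    by (intro fls_subdegree_geI) (auto simp: vanishes_below_def)
  have "(F * G) $$ n = (\<Sum>i=fls_subdegree F..n - fls_subdegree G. F $$ i * G $$ (n - i))"
    by (rule fls_times_nth(2))
  also have "\<dots> = (\<Sum>i=a..n-b. F $$ i * G $$ (n - i))"
  proof (rule sum.mono_neutral_left)
    show "finite {a..n-b}" by simp
    show "{fls_subdegree F..n - fls_subdegree G} \<subseteq> {a..n-b}" using da db by auto
    show "\<forall>i\<in>{a..n - b} - {fls_subdegree F..n - fls_subdegree G}. F $$ i * G $$ (n - i) = 0"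
      by auto
  qed
  finally show ?thesis .
qed

lemma vanishes_below_times: "vanishes_below a F \<Longrightarrow> vanishes_below b G \<Longrightarrow> vanishes_below (a + b) (F * G)"
  by (subst vanishes_below_def, auto simp: fls_times_nth_vanishes_below)

lemma fls_times_nth_nonzero_support:
  fixes F G :: "complex fls"
  shows "(F * G) $$ n = (\<Sum>i | F $$ i \<noteq> 0 \<and> G $$ (n - i) \<noteq> 0. F $$ i * G $$ (n - i))"
proof -
  have sub: "{i. F $$ i \<noteq> 0 \<and> G $$ (n - i) \<noteq> 0} \<subseteq> {fls_subdegree F..n - fls_subdegree G}"
    using fls_subdegree_leI[of F] fls_subdegree_leI[of G] by fastforce
  have "(F * G) $$ n = (\<Sum>i=fls_subdegree F..n - fls_subdegree G. F $$ i * G $$ (n - i))"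
    by (rule fls_times_nth(2))
  also have "\<dots> = (\<Sum>i | F $$ i \<noteq> 0 \<and> G $$ (n - i) \<noteq> 0. F $$ i * G $$ (n - i))"
    by (rule sum.mono_neutral_right) (use sub in auto)
  finally show ?thesis .
qed

lemma ser_mult_eq_fls_times_nth:
  assumes "unit_sign s" "ser_bdd s A" "ser_bdd s B"
  shows "ser_mult A B (s * n) = (fls_of_ser s A * fls_of_ser s B) $$ n"
proof -
  have inj: "inj ((*) s)" using assms(1) by (auto simp: unit_sign_def inj_def)
  have img: "(*) s ` {i. fls_of_ser s A $$ i \<noteq> 0 \<and> fls_of_ser s B $$ (n - i) \<noteq> 0}
        = {x. A x \<noteq> 0 \<and> B (s * n - x) \<noteq> 0}"
  proof -
    have "x \<in> (*) s ` {i. fls_of_ser s A $$ i \<noteq> 0 \<and> fls_of_ser s B $$ (n - i) \<noteq> 0} \<longleftrightarrow>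
          (A x \<noteq> 0 \<and> B (s * n - x) \<noteq> 0)" for x
    proof -
      have "x = s * (s * x)" using unit_sign_mult_cancel[OF assms(1)] by simp
      have e: "fls_of_ser s A $$ i = A (s * i)" "fls_of_ser s B $$ (n - i) = B (s * n - s * i)" for i
        using fls_of_ser_nth[OF assms(1,2)] fls_of_ser_nth[OF assms(1,3)] by (auto simp: algebra_simps)
      show ?thesis
      proof
        assume "x \<in> (*) s ` {i. fls_of_ser s A $$ i \<noteq> 0 \<and> fls_of_ser s B $$ (n - i) \<noteq> 0}"
        then obtain i where "x = s * i" "fls_of_ser s A $$ i \<noteq> 0 \<and> fls_of_ser s B $$ (n - i) \<noteq> 0" by auto
        thus "A x \<noteq> 0 \<and> B (s * n - x) \<noteq> 0" using e by auto
      next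
        assume a: "A x \<noteq> 0 \<and> B (s * n - x) \<noteq> 0"
        have "fls_of_ser s A $$ (s * x) \<noteq> 0 \<and> fls_of_ser s B $$ (n - s * x) \<noteq> 0"
          using a e[of "s * x"] unit_sign_mult_cancel[OF assms(1)] by simp
        thus "x \<in> (*) s ` {i. fls_of_ser s A $$ i \<noteq> 0 \<and> fls_of_ser s B $$ (n - i) \<noteq> 0}"
          using \<open>x = s * (s * x)\<close> by blast
      qed
    qed
    thus ?thesis by blast
  qed
  have "(fls_of_ser s A * fls_of_ser s B) $$ n
      = (\<Sum>i | fls_of_ser s A $$ i \<noteq> 0 \<and> fls_of_ser s B $$ (n - i) \<noteq> 0.
           fls_of_ser s A $$ i * fls_of_ser s B $$ (n - i))"
    by (rule fls_times_nth_nonzero_support)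
  also have "\<dots> = (\<Sum>i | fls_of_ser s A $$ i \<noteq> 0 \<and> fls_of_ser s B $$ (n - i) \<noteq> 0. A (s * i) * B (s * n - s * i))"
    by (rule sum.cong) (auto simp: fls_of_ser_nth[OF assms(1,2)] fls_of_ser_nth[OF assms(1,3)] algebra_simps)
  also have "\<dots> = (\<Sum>x\<in>(*) s ` {i. fls_of_ser s A $$ i \<noteq> 0 \<and> fls_of_ser s B $$ (n - i) \<noteq> 0}. A x * B (s * n - x))"
    by (rule sum.reindex[symmetric, unfolded comp_def]) (use inj in \<open>auto simp: inj_on_def\<close>)
  also have "\<dots> = ser_mult A B (s * n)" unfolding img ser_mult_def ..
  finally show ?thesis ..
qed

lemma ser_bdd_of_fls: assumes "unit_sign s" "\<And>j. A j = F $$ (s * j)" shows "ser_bdd s A"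
  unfolding ser_bdd_def by (intro exI[of _ "fls_subdegree F"]) (simp add: assms(2))

lemma fls_of_ser_of_fls: assumes "unit_sign s" "\<And>j. A j = F $$ (s * j)" shows "fls_of_ser s A = F"
proof (rule fls_eqI)
  fix n have "fls_of_ser s A $$ n = A (s * n)" by (rule fls_of_ser_nth[OF assms(1) ser_bdd_of_fls[OF assms]])
  also have "\<dots> = F $$ (s * (s * n))" by (rule assms(2))
  also have "\<dots> = F $$ n" by (simp only: unit_sign_mult_cancel[OF assms(1)])
  finally show "fls_of_ser s A $$ n = F $$ n" .
qed

lemma fls_of_ser_mult:
  assumes "unit_sign s" "ser_bdd s A" "ser_bdd s B"
  shows "ser_bdd s (ser_mult A B)" "fls_of_ser s (ser_mult A B) = fls_of_ser s A * fls_of_ser s B"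
proof -
  have *: "ser_mult A B j = (fls_of_ser s A * fls_of_ser s B) $$ (s * j)" for j
    using ser_mult_eq_fls_times_nth[OF assms, of "s*j"] unit_sign_mult_cancel[OF assms(1)] by simp
  show "ser_bdd s (ser_mult A B)" by (rule ser_bdd_of_fls[OF assms(1) *])
  show "fls_of_ser s (ser_mult A B) = fls_of_ser s A * fls_of_ser s B" by (rule fls_of_ser_of_fls[OF assms(1) *])
qed

lemma fls_of_ser_add: assumes "unit_sign s" "ser_bdd s A" "ser_bdd s B"
  shows "ser_bdd s (ser_add A B)" "fls_of_ser s (ser_add A B) = fls_of_ser s A + fls_of_ser s B"
proof -
  have *: "ser_add A B j = (fls_of_ser s A + fls_of_ser s B) $$ (s * j)" for j
    using ser_eq_fls_of_ser_nth[OF assms(1,2)] ser_eq_fls_of_ser_nth[OF assms(1,3)] by (simp add: ser_add_def)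
  show "ser_bdd s (ser_add A B)" by (rule ser_bdd_of_fls[OF assms(1) *])
  show "fls_of_ser s (ser_add A B) = fls_of_ser s A + fls_of_ser s B" by (rule fls_of_ser_of_fls[OF assms(1) *])
qed

lemma fls_of_ser_sub: assumes "unit_sign s" "ser_bdd s A" "ser_bdd s B"
  shows "ser_bdd s (ser_sub A B)" "fls_of_ser s (ser_sub A B) = fls_of_ser s A - fls_of_ser s B"
proof -
  have *: "ser_sub A B j = (fls_of_ser s A - fls_of_ser s B) $$ (s * j)" for j
    using ser_eq_fls_of_ser_nth[OF assms(1,2)] ser_eq_fls_of_ser_nth[OF assms(1,3)] by (simp add: ser_sub_def)
  show "ser_bdd s (ser_sub A B)" by (rule ser_bdd_of_fls[OF assms(1) *])
  show "fls_of_ser s (ser_sub A B) = fls_of_ser s A - fls_of_ser s B" by (rule fls_of_ser_of_fls[OF assms(1) *])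
qed

lemma fls_of_ser_const: assumes "unit_sign s"
  shows "ser_bdd s (ser_const c)" "fls_of_ser s (ser_const c) = fls_const c"
proof -
  have *: "ser_const c j = (fls_const c) $$ (s * j)" for j
    using assms by (auto simp: ser_const_def unit_sign_def)
  show "ser_bdd s (ser_const c)" by (rule ser_bdd_of_fls[OF assms(1) *])
  show "fls_of_ser s (ser_const c) = fls_const c" by (rule fls_of_ser_of_fls[OF assms(1) *])
qed

lemma fls_of_ser_one: assumes "unit_sign s"
  shows "ser_bdd s ser_one" "fls_of_ser s ser_one = 1"
proof -
  have e: "ser_one = ser_const 1" by (auto simp: ser_one_def ser_const_def)
  show "ser_bdd s ser_one" "fls_of_ser s ser_one = 1" unfolding e using fls_of_ser_const[OF assms, of 1]
    by (auto simp: fls_const_1)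
qed

lemma fls_of_ser_pow: assumes "unit_sign s" "ser_bdd s A"
  shows "ser_bdd s (ser_pow A n) \<and> fls_of_ser s (ser_pow A n) = fls_of_ser s A ^ n"
proof (induction n)
  case 0 then show ?case using fls_of_ser_one[OF assms(1)] by simp
next
  case (Suc n) then show ?case using fls_of_ser_mult[OF assms(1,2), of "ser_pow A n"] by simp
qed

text \<open>\<open>d/dp\<close> in the variable \<open>X = p\<^sup>s\<close>: for \<open>s = -1\<close>, \<open>d/dp = -X\<^sup>2 d/dX\<close>.\<close>
definition fls_dp :: "int \<Rightarrow> complex fls \<Rightarrow> complex fls" where
  "fls_dp s F = (if s = 1 then fls_deriv F else - (fls_X ^ 2 * fls_deriv F))"

lemma fls_dp_nth: "unit_sign s \<Longrightarrow> fls_dp s F $$ n = of_int (s * n + 1) * F $$ (n + s)"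
  by (auto simp: unit_sign_def fls_dp_def fls_X_power_times_conv_shift algebra_simps)

lemma fls_of_ser_dp: assumes "unit_sign s" "ser_bdd s A"
  shows "ser_bdd s (ser_dp A)" "fls_of_ser s (ser_dp A) = fls_dp s (fls_of_ser s A)"
proof -
  have *: "ser_dp A j = (fls_dp s (fls_of_ser s A)) $$ (s * j)" for j
  proof -
    have "(fls_dp s (fls_of_ser s A)) $$ (s * j) = of_int (s * (s * j) + 1) * fls_of_ser s A $$ (s * j + s)"
      by (rule fls_dp_nth[OF assms(1)])
    also have "fls_of_ser s A $$ (s * j + s) = A (s * (s * j + s))" by (rule fls_of_ser_nth[OF assms])
    also have "A (s * (s * j + s)) = A (j + 1)" using assms(1) by (auto simp: unit_sign_def add.commute)
    also have "of_int (s * (s * j) + 1) = (of_int (j + 1) :: complex)" using assms(1) by (auto simp: unit_sign_def)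
    finally show ?thesis by (simp add: ser_dp_def)
  qed
  show "ser_bdd s (ser_dp A)" by (rule ser_bdd_of_fls[OF assms(1) *])
  show "fls_of_ser s (ser_dp A) = fls_dp s (fls_of_ser s A)" by (rule fls_of_ser_of_fls[OF assms(1) *])
qed

lemma fls_dp_add: "fls_dp s (F + G) = fls_dp s F + fls_dp s G"
  by (auto simp: fls_dp_def algebra_simps)
lemma fls_dp_diff: "fls_dp s (F - G) = fls_dp s F - fls_dp s G"
  by (auto simp: fls_dp_def algebra_simps)
lemma fls_dp_mult: "fls_dp s (F * G) = F * fls_dp s G + fls_dp s F * G"
  by (auto simp: fls_dp_def algebra_simps)
lemma fls_dp_const: "fls_dp s (fls_const c) = 0"
  by (auto simp: fls_dp_def)
lemma fls_dp_sum: "fls_dp s (sum f I) = (\<Sum>i\<in>I. fls_dp s (f i))"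
  by (auto simp: fls_dp_def fls_deriv_sum sum_distrib_left sum_negf)
lemma fls_dp_residue: "unit_sign s \<Longrightarrow> fls_dp s F $$ (- s) = 0"
  by (auto simp: fls_dp_nth unit_sign_def)

lemma fls_dp_power: "fls_dp s (F ^ n) = of_nat n * F ^ (n - 1) * fls_dp s F"
  by (auto simp: fls_dp_def fls_deriv_power algebra_simps)

lemma fls_dp_inverse: fixes F :: "complex fls" assumes "F \<noteq> 0"
  shows "fls_dp s (inverse F) = - (inverse F ^ 2 * fls_dp s F)"
proof -
  have "fls_dp s (F * inverse F) = 0" using assms by (simp add: fls_dp_def)
  hence h: "F * fls_dp s (inverse F) = - (fls_dp s F * inverse F)"
    unfolding fls_dp_mult by (simp add: eq_neg_iff_add_eq_0)
  have "fls_dp s (inverse F) = (inverse F * F) * fls_dp s (inverse F)" using assms by simp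
  also have "\<dots> = inverse F * (F * fls_dp s (inverse F))" by (simp only: mult.assoc)
  also have "\<dots> = inverse F * (-(fls_dp s F * inverse F))" using h by simp
  also have "\<dots> = -(inverse F ^ 2 * fls_dp s F)" by (simp add: power2_eq_square algebra_simps)
  finally show ?thesis .
qed

lemma ser_bdd_1_iff: "ser_bdd 1 B \<longleftrightarrow> bdd_below_ser B"
  by (simp add: ser_bdd_def bdd_below_ser_def)

lemma ser_bdd_minus_1_iff: "ser_bdd (-1) B \<longleftrightarrow> bdd_above_ser B"
  unfolding ser_bdd_def bdd_above_ser_def
  by (metis add.inverse_inverse minus_less_iff mult_minus1)

definition ser_inv :: "int \<Rightarrow> ser \<Rightarrow> ser" where
  "ser_inv s A = (THE B. ser_bdd s B \<and> ser_mult A B = ser_one)"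

lemma inv_up_eq: "inv_up A = ser_inv (-1) A"
  by (simp add: inv_up_def ser_inv_def ser_bdd_minus_1_iff)

lemma inv_down_eq: "inv_down A = ser_inv 1 A"
  by (simp add: inv_down_def ser_inv_def ser_bdd_1_iff)

lemma fls_of_ser_inv: assumes "unit_sign s" "ser_bdd s A" "fls_of_ser s A \<noteq> 0"
  shows "ser_bdd s (ser_inv s A)" "fls_of_ser s (ser_inv s A) = inverse (fls_of_ser s A)"
proof -
  define B where "B j = inverse (fls_of_ser s A) $$ (s * j)" for j
  have bB: "ser_bdd s B" by (rule ser_bdd_of_fls[OF assms(1)]) (simp add: B_def)
  have PB: "fls_of_ser s B = inverse (fls_of_ser s A)" by (rule fls_of_ser_of_fls[OF assms(1)]) (simp add: B_def)
  have "ser_inv s A = B"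
    unfolding ser_inv_def
  proof (rule the_equality)
    show "ser_bdd s B \<and> ser_mult A B = ser_one"
    proof
      show "ser_bdd s B" by (rule bB)
      have "fls_of_ser s (ser_mult A B) = fls_of_ser s ser_one"
        using fls_of_ser_mult(2)[OF assms(1,2) bB] PB assms(3) fls_of_ser_one[OF assms(1)] by simp
      thus "ser_mult A B = ser_one"
        using fls_of_ser_inject[OF assms(1)] fls_of_ser_mult(1)[OF assms(1,2) bB] fls_of_ser_one[OF assms(1)] by blast
    qed
  next
    fix C assume C: "ser_bdd s C \<and> ser_mult A C = ser_one"
    hence bC: "ser_bdd s C" by simp
    have "fls_of_ser s A * fls_of_ser s C = 1"
      using C fls_of_ser_mult(2)[OF assms(1,2) bC] fls_of_ser_one[OF assms(1)] by simp
    hence "fls_of_ser s C = inverse (fls_of_ser s A)" using assms(3) by (metis field_class.field_inverse mult.left_commute mult_1_right)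
    thus "C = B" using fls_of_ser_inject[OF assms(1) bC bB] PB by simp
  qed
  thus "ser_bdd s (ser_inv s A)" "fls_of_ser s (ser_inv s A) = inverse (fls_of_ser s A)" using bB PB by simp_all
qed

text \<open>The part with positive powers of \<open>p\<close>.\<close>
definition fls_pos_part :: "int \<Rightarrow> complex fls \<Rightarrow> complex fls" where
  "fls_pos_part s F = Abs_fls (\<lambda>j. if s * j > 0 then F $$ j else 0)"

lemma fls_pos_part_nth: "fls_pos_part s F $$ j = (if s * j > 0 then F $$ j else 0)"
  unfolding fls_pos_part_def by (rule nth_Abs_fls_lower_bound[of "fls_subdegree F"]) simp

lemma fls_of_ser_pos_part: assumes "unit_sign s" "ser_bdd s A"
  shows "ser_bdd s (pos_part A)" "fls_of_ser s (pos_part A) = fls_pos_part s (fls_of_ser s A)"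
proof -
  have *: "pos_part A j = fls_pos_part s (fls_of_ser s A) $$ (s * j)" for j
    using ser_eq_fls_of_ser_nth[OF assms, of j] fls_pos_part_nth[of s "fls_of_ser s A" "s * j"] assms(1)
    by (auto simp: pos_part_def unit_sign_def)
  show "ser_bdd s (pos_part A)" by (rule ser_bdd_of_fls[OF assms(1) *])
  show "fls_of_ser s (pos_part A) = fls_pos_part s (fls_of_ser s A)" by (rule fls_of_ser_of_fls[OF assms(1) *])
qed

lemma fls_of_ser_nonpos_part: assumes "unit_sign s" "ser_bdd s A"
  shows "ser_bdd s (nonpos_part A)" "fls_of_ser s (nonpos_part A) = fls_of_ser s A - fls_pos_part s (fls_of_ser s A)"
proof -
  have *: "nonpos_part A j = (fls_of_ser s A - fls_pos_part s (fls_of_ser s A)) $$ (s * j)" for j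
    using ser_eq_fls_of_ser_nth[OF assms, of j] fls_pos_part_nth[of s "fls_of_ser s A" "s * j"] assms(1)
    by (auto simp: nonpos_part_def unit_sign_def)
  show "ser_bdd s (nonpos_part A)" by (rule ser_bdd_of_fls[OF assms(1) *])
  show "fls_of_ser s (nonpos_part A) = fls_of_ser s A - fls_pos_part s (fls_of_ser s A)" by (rule fls_of_ser_of_fls[OF assms(1) *])
qed

section \<open>Coefficientwise derivatives\<close>

text \<open>The product rule needs orders bounded below uniformly in the parameter
  (\<open>unif_vanishes_below\<close>), so that every coefficient of a product is one fixed finite sum.\<close>
definition has_fls_deriv :: "(complex \<Rightarrow> complex fls) \<Rightarrow> complex fls \<Rightarrow> complex \<Rightarrow> bool" where
  "has_fls_deriv A A' s0 \<longleftrightarrow> (\<forall>n. ((\<lambda>s. A s $$ n) has_field_derivative A' $$ n) (at s0))"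

definition unif_vanishes_below :: "int \<Rightarrow> (complex \<Rightarrow> complex fls) \<Rightarrow> bool" where
  "unif_vanishes_below c A \<longleftrightarrow> (\<forall>s. vanishes_below c (A s))"

lemma has_fls_deriv_unique: "has_fls_deriv A A1 s0 \<Longrightarrow> has_fls_deriv A A2 s0 \<Longrightarrow> A1 = A2"
  unfolding has_fls_deriv_def by (intro fls_eqI) (metis DERIV_unique)

lemma has_fls_deriv_vanishes_below: assumes "unif_vanishes_below c A" "has_fls_deriv A A' s0" shows "vanishes_below c A'"
  unfolding vanishes_below_def
proof (intro allI impI)
  fix n assume "n < c"
  hence "(\<lambda>s. A s $$ n) = (\<lambda>s. 0)" using assms(1) by (auto simp: unif_vanishes_below_def vanishes_below_def)
  hence "((\<lambda>s. A s $$ n) has_field_derivative 0) (at s0)" by simp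
  thus "A' $$ n = 0" using assms(2) unfolding has_fls_deriv_def by (metis DERIV_unique)
qed

lemma has_fls_deriv_deriv_nth: "has_fls_deriv A A' s0 \<Longrightarrow> deriv (\<lambda>s. A s $$ n) s0 = A' $$ n"
  unfolding has_fls_deriv_def by (metis DERIV_imp_deriv)

lemma has_fls_deriv_const: "has_fls_deriv (\<lambda>s. F) 0 s0"
  by (simp add: has_fls_deriv_def)

lemma has_fls_deriv_add: "has_fls_deriv A A' s0 \<Longrightarrow> has_fls_deriv B B' s0 \<Longrightarrow> has_fls_deriv (\<lambda>s. A s + B s) (A' + B') s0"
  unfolding has_fls_deriv_def by (auto intro: derivative_intros)

lemma has_fls_deriv_sum:
  "(\<And>x. x \<in> S \<Longrightarrow> has_fls_deriv (A x) (A' x) s0) \<Longrightarrow>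
    has_fls_deriv (\<lambda>s. \<Sum>x\<in>S. A x s) (\<Sum>x\<in>S. A' x) s0"
proof (induction S rule: infinite_finite_induct)
  case (infinite A) then show ?case by (simp add: has_fls_deriv_const)
next
  case empty then show ?case by (simp add: has_fls_deriv_const)
next
  case (insert x F) then show ?case by (simp add: has_fls_deriv_add)
qed

lemma has_fls_deriv_const_times: assumes "((\<lambda>s. c s) has_field_derivative c') (at s0)" "has_fls_deriv A A' s0"
  shows "has_fls_deriv (\<lambda>s. fls_const (c s) * A s) (fls_const c' * A s0 + fls_const (c s0) * A') s0"
  using assms unfolding has_fls_deriv_def by (auto intro!: derivative_eq_intros)

lemma has_fls_deriv_mult: assumes "unif_vanishes_below a A" "unif_vanishes_below b B" "has_fls_deriv A A' s0" "has_fls_deriv B B' s0"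
  shows "has_fls_deriv (\<lambda>s. A s * B s) (A' * B s0 + A s0 * B') s0"
  unfolding has_fls_deriv_def
proof
  fix n
  have la: "vanishes_below a A'" by (rule has_fls_deriv_vanishes_below[OF assms(1,3)])
  have lb: "vanishes_below b B'" by (rule has_fls_deriv_vanishes_below[OF assms(2,4)])
  have e: "(\<lambda>s. (A s * B s) $$ n) = (\<lambda>s. \<Sum>i=a..n-b. A s $$ i * B s $$ (n - i))"
    using assms(1,2) by (auto simp: unif_vanishes_below_def fls_times_nth_vanishes_below)
  have "((\<lambda>s. \<Sum>i=a..n-b. A s $$ i * B s $$ (n - i)) has_field_derivative
         (\<Sum>i=a..n-b. A' $$ i * B s0 $$ (n - i) + A s0 $$ i * B' $$ (n - i))) (at s0)"
    using assms(3,4) unfolding has_fls_deriv_def by (auto intro!: derivative_eq_intros simp: mult.commute)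
  moreover have "(\<Sum>i=a..n-b. A' $$ i * B s0 $$ (n - i) + A s0 $$ i * B' $$ (n - i))
      = (A' * B s0 + A s0 * B') $$ n"
    using assms(1,2) la lb
    by (simp add: unif_vanishes_below_def sum.distrib fls_times_nth_vanishes_below[of a A' b "B s0"]
        fls_times_nth_vanishes_below[of a "A s0" b B'])
  ultimately show "((\<lambda>s. (A s * B s) $$ n) has_field_derivative (A' * B s0 + A s0 * B') $$ n) (at s0)"
    unfolding e by simp
qed

lemma unif_vanishes_below_mult:
  "unif_vanishes_below a A \<Longrightarrow> unif_vanishes_below b B \<Longrightarrow> unif_vanishes_below (a + b) (\<lambda>s. A s * B s)"
  by (auto simp: unif_vanishes_below_def vanishes_below_times)

lemma unif_vanishes_below_power: "unif_vanishes_below a A \<Longrightarrow> unif_vanishes_below (int n * a) (\<lambda>s. A s ^ n)"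
proof (induction n)
  case 0 then show ?case by (auto simp: unif_vanishes_below_def vanishes_below_def)
next
  case (Suc n)
  then have "unif_vanishes_below (a + int n * a) (\<lambda>s. A s * A s ^ n)" using unif_vanishes_below_mult by blast
  then show ?case by (simp add: algebra_simps)
qed

lemma has_fls_deriv_power: assumes "unif_vanishes_below a A" "has_fls_deriv A A' s0"
  shows "has_fls_deriv (\<lambda>s. A s ^ n) (of_nat n * A s0 ^ (n - 1) * A') s0"
proof (induction n)
  case 0 then show ?case by (simp add: has_fls_deriv_const)
next
  case (Suc n)
  have "has_fls_deriv (\<lambda>s. A s * A s ^ n) (A' * A s0 ^ n + A s0 * (of_nat n * A s0 ^ (n - 1) * A')) s0"
    by (rule has_fls_deriv_mult[OF assms(1) unif_vanishes_below_power[OF assms(1)] assms(2) Suc])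
  moreover have "A' * A s0 ^ n + A s0 * (of_nat n * A s0 ^ (n - 1) * A') = of_nat (Suc n) * A s0 ^ n * A'"
    by (cases n) (auto simp: algebra_simps)
  ultimately show ?case by simp
qed

lemma vanishes_below_subdegree: assumes "vanishes_below d F" "F $$ d \<noteq> 0" shows "fls_subdegree F = d"
  using assms by (intro fls_subdegree_eqI) (auto simp: vanishes_below_def)

lemma vanishes_below_inverse: fixes F :: "complex fls" assumes "vanishes_below d F" "F $$ d \<noteq> 0"
  shows "vanishes_below (-d) (inverse F)"
  using vanishes_below_subdegree[OF assms] by (auto simp: vanishes_below_def)

lemma unif_vanishes_below_inverse:
  assumes "unif_vanishes_below d A" "\<forall>s. A s $$ d \<noteq> 0"
  shows "unif_vanishes_below (-d) (\<lambda>s. inverse (A s))"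
  using assms vanishes_below_inverse by (auto simp: unif_vanishes_below_def)

lemma inverse_nth_differentiable:
  assumes ul: "unif_vanishes_below d A" and nz: "\<forall>s. A s $$ d \<noteq> 0"
    and dA: "\<And>i. (\<lambda>s. A s $$ i) field_differentiable at s0"
  shows "(\<lambda>s. inverse (A s) $$ j) field_differentiable at s0"
proof -
  define B where "B s = inverse (A s)" for s
  have lB: "vanishes_below (-d) (B s)" for s
    using unif_vanishes_below_inverse[OF ul nz] by (simp add: unif_vanishes_below_def B_def)
  have AB: "A s * B s = 1" for s using nz by (metis B_def fls_zero_nth right_inverse)
  \<comment> \<open>Solve A * B = 1 for the coefficients of B one at a time, starting at the lowest one.\<close>
  have step: "(\<lambda>s. B s $$ (int n - d)) field_differentiable at s0" for n :: nat
  proof (induction n rule: less_induct)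
    case (less n)
    have eq: "B s $$ (int n - d) = ((1::complex fls) $$ int n
              - (\<Sum>i\<in>{d+1..int n+d}. A s $$ i * B s $$ (int n - i))) / A s $$ d" for s
    proof -
      have "(A s * B s) $$ int n = (\<Sum>i=d..int n - (-d). A s $$ i * B s $$ (int n - i))"
        by (rule fls_times_nth_vanishes_below) (use ul lB in \<open>auto simp: unif_vanishes_below_def\<close>)
      then have "(1::complex fls) $$ int n = (\<Sum>i=d..int n - (-d). A s $$ i * B s $$ (int n - i))"
        by (simp only: AB)
      also have "{d..int n - (-d)} = insert d {d+1..int n+d}" by auto
      finally show ?thesis using nz by (auto simp: field_simps)
    qed
    have "(\<lambda>s. B s $$ (int n - i)) field_differentiable at s0" if "i \<in> {d+1..int n+d}" for i
    proof -
      have "nat (int n + d - i) < n" using that by auto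
      then show ?thesis using less[of "nat (int n + d - i)"] that by simp
    qed
    with nz dA show ?case unfolding eq by (auto intro!: derivative_intros)
  qed
  show ?thesis
  proof (cases "j < -d")
    case True
    then show ?thesis using lB by (simp add: vanishes_below_def B_def)
  next
    case False
    then show ?thesis using step[of "nat (j + d)"] by (simp add: B_def)
  qed
qed

lemma has_fls_deriv_of_differentiable:
  assumes "unif_vanishes_below c B" "\<And>j. (\<lambda>s. B s $$ j) field_differentiable at s0"
  shows "has_fls_deriv B (Abs_fls (\<lambda>j. deriv (\<lambda>s. B s $$ j) s0)) s0"
proof -
  have "\<forall>j<c. deriv (\<lambda>s. B s $$ j) s0 = 0"
    using assms(1) by (simp add: unif_vanishes_below_def vanishes_below_def)
  then have "Abs_fls (\<lambda>j. deriv (\<lambda>s. B s $$ j) s0) $$ j = deriv (\<lambda>s. B s $$ j) s0" for j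
    by (intro nth_Abs_fls_lower_bound) blast
  with assms(2) show ?thesis
    by (simp add: has_fls_deriv_def DERIV_deriv_iff_field_differentiable)
qed

lemma has_fls_deriv_inverse:
  assumes ul: "unif_vanishes_below d A" and nz: "\<forall>s. A s $$ d \<noteq> 0" and hd: "has_fls_deriv A A' s0"
  shows "has_fls_deriv (\<lambda>s. inverse (A s)) (-(inverse (A s0) ^ 2 * A')) s0"
proof -
  have Anz: "A s \<noteq> 0" for s using nz by (metis fls_zero_nth)
  have uB: "unif_vanishes_below (-d) (\<lambda>s. inverse (A s))" by (rule unif_vanishes_below_inverse[OF ul nz])
  have "\<And>i. (\<lambda>s. A s $$ i) field_differentiable at s0"
    using hd unfolding has_fls_deriv_def field_differentiable_def by blast
  then obtain B' where hB: "has_fls_deriv (\<lambda>s. inverse (A s)) B' s0"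
    using has_fls_deriv_of_differentiable[OF uB inverse_nth_differentiable[OF ul nz]] by blast
  have "has_fls_deriv (\<lambda>s. A s * inverse (A s)) (A' * inverse (A s0) + A s0 * B') s0"
    by (rule has_fls_deriv_mult[OF ul uB hd hB])
  moreover have "has_fls_deriv (\<lambda>s. A s * inverse (A s)) 0 s0"
    using Anz has_fls_deriv_const[of 1] by simp
  ultimately have "A' * inverse (A s0) + A s0 * B' = 0" by (rule has_fls_deriv_unique)
  hence "B' = - (inverse (A s0) ^ 2 * A')"
    using Anz[of s0] by (simp add: power2_eq_square field_simps add_eq_0_iff2)
  then show ?thesis using hB by simp
qed

lemma has_fls_deriv_power_int:
  assumes ul: "unif_vanishes_below d A" and nz: "\<forall>s. A s $$ d \<noteq> 0" and hd: "has_fls_deriv A A' s0"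
  shows "has_fls_deriv (\<lambda>s. A s powi e) (of_int e * A s0 powi (e - 1) * A') s0"
proof (cases "e \<ge> 0")
  case True
  have "of_nat (nat e) * A s0 ^ (nat e - 1) * A' = of_int e * A s0 powi (e - 1) * A'"
    using True by (cases "e = 0") (simp_all add: power_int_def nat_diff_distrib)
  moreover have "(\<lambda>s. A s powi e) = (\<lambda>s. A s ^ nat e)" using True by (simp add: power_int_def)
  ultimately show ?thesis using has_fls_deriv_power[OF ul hd, of "nat e"] by metis
next
  case False
  define n where "n = nat (-e)"
  have n: "n \<ge> 1" "e = - int n" using False by (auto simp: n_def)
  have "A s0 powi (e - 1) = inverse (A s0) ^ (n - 1) * inverse (A s0) ^ 2"
    using n by (simp add: power_int_def nat_add_distrib power_add[symmetric])
  then have "of_nat n * inverse (A s0) ^ (n - 1) * (-(inverse (A s0) ^ 2 * A'))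
      = of_int e * A s0 powi (e - 1) * A'"
    using n by (simp add: algebra_simps)
  moreover have "(\<lambda>s. A s powi e) = (\<lambda>s. inverse (A s) ^ n)" using n by (simp add: power_int_def)
  ultimately show ?thesis
    using has_fls_deriv_power[OF unif_vanishes_below_inverse[OF ul nz] has_fls_deriv_inverse[OF ul nz hd], of n]
    by metis
qed

lemma fls_dp_power_int: fixes F :: "complex fls" assumes "F \<noteq> 0"
  shows "fls_dp s (F powi e) = of_int e * F powi (e - 1) * fls_dp s F"
proof (cases "e \<ge> 0")
  case True
  then show ?thesis
  proof (cases "e = 0")
    case False
    hence "nat (e - 1) = nat e - 1" "e - 1 \<ge> 0" using True by auto
    then show ?thesis using True by (simp add: power_int_def fls_dp_power)
  qed (simp add: fls_dp_const[of s 1, simplified fls_const_1])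
next
  case False
  define n where "n = nat (-e)"
  have n: "n \<ge> 1" "e = - int n" using False by (auto simp: n_def)
  have "fls_dp s (inverse F ^ n) = of_nat n * inverse F ^ (n - 1) * (-(inverse F ^ 2 * fls_dp s F))"
    by (simp add: fls_dp_power fls_dp_inverse[OF assms])
  moreover have "inverse F ^ (n + 1) = inverse F ^ (n - 1) * inverse F ^ 2"
    using n(1) by (simp add: power_add[symmetric])
  ultimately show ?thesis using n by (simp add: power_int_def nat_add_distrib algebra_simps)
qed

lemma vanishes_below_fls_dp: assumes "unit_sign s" "vanishes_below c F" shows "vanishes_below (c - 1) (fls_dp s F)"
  using assms by (auto simp: vanishes_below_def fls_dp_nth unit_sign_def)

lemma vanishes_below_add: "vanishes_below a F \<Longrightarrow> vanishes_below b G \<Longrightarrow> vanishes_below (min a b) (F + G)"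
  by (auto simp: vanishes_below_def)
lemma vanishes_below_diff: "vanishes_below a F \<Longrightarrow> vanishes_below b G \<Longrightarrow> vanishes_below (min a b) (F - G)"
  by (auto simp: vanishes_below_def)
lemma vanishes_below_uminus: "vanishes_below a F \<Longrightarrow> vanishes_below a (- F)"
  by (auto simp: vanishes_below_def)

section \<open>Residues\<close>

lemma residue_inverse_fls_dp:
  fixes F :: "complex fls"
  assumes s: "unit_sign s" and sd: "fls_subdegree F = -1"
  shows "(inverse F * fls_dp s F) $$ (- s) = - of_int s"
proof (cases "s = 1")
  case True
  then show ?thesis using fls_residue_deriv_times_inverse_eq_subdegree(2)[of F] sd
    by (simp add: fls_dp_def)
next
  case False
  hence s1: "s = -1" using s by (simp add: unit_sign_def)
  have "inverse F * fls_dp s F = - (fls_X ^ 2 * (inverse F * fls_deriv F))"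
    using s1 by (simp add: fls_dp_def algebra_simps)
  hence "(inverse F * fls_dp s F) $$ 1 = - ((inverse F * fls_deriv F) $$ (-1))"
    by (simp add: fls_X_power_times_conv_shift)
  then show ?thesis using fls_residue_deriv_times_inverse_eq_subdegree(2)[of F] sd s1
    by simp
qed

lemma residue_power_int_fls_dp:
  fixes F :: "complex fls"
  assumes s: "unit_sign s" and l: "vanishes_below (-1) F" "F $$ (-1) \<noteq> 0"
  shows "(F powi a * fls_dp s F) $$ (- s) = (if a = -1 then - of_int s else 0)"
proof (cases "a = -1")
  case True
  then show ?thesis
    using residue_inverse_fls_dp[OF s vanishes_below_subdegree[OF l]] by simp
next
  case False
  have Fnz: "F \<noteq> 0" using l(2) by (metis fls_zero_nth)
  define c :: complex where "c = of_int (a + 1)"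
  have c: "c \<noteq> 0" unfolding c_def of_int_eq_0_iff using False by simp
  have "fls_dp s (F powi (a + 1)) = fls_const c * (F powi a * fls_dp s F)"
    using fls_dp_power_int[OF Fnz, of s "a + 1"] by (simp add: c_def fls_of_int)
  then have "F powi a * fls_dp s F = fls_const (inverse c) * fls_dp s (F powi (a + 1))"
    using c by (simp add: mult.assoc[symmetric] fls_const_mult_const[symmetric])
  then show ?thesis using False fls_dp_residue[OF s, of "F powi (a + 1)"] by simp
qed

lemma fls_times_nth_eq_0I:
  assumes "\<And>i. X $$ i * Y $$ (n - i) = 0"
  shows "((X :: complex fls) * Y) $$ n = 0"
  unfolding fls_times_nth(2) by (simp add: assms)

lemma residue_fls_dp_antisym: assumes "unit_sign s" shows "(X * fls_dp s Y) $$ (- s) = - ((Y * fls_dp s X) $$ (- s))"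
proof -
  have "fls_dp s (X * Y) $$ (- s) = 0" by (rule fls_dp_residue[OF assms])
  thus ?thesis unfolding fls_dp_mult by (simp add: mult.commute eq_neg_iff_add_eq_0)
qed

lemma residue_pos_parts: assumes s: "unit_sign s" shows "(fls_pos_part s X * fls_dp s (fls_pos_part s Y)) $$ (- s) = 0"
proof (rule fls_times_nth_eq_0I)
  fix i
  show "fls_pos_part s X $$ i * fls_dp s (fls_pos_part s Y) $$ (- s - i) = 0"
    using s by (auto simp: fls_pos_part_nth fls_dp_nth unit_sign_def)
qed

lemma residue_nonpos_parts: assumes s: "unit_sign s" shows "((X - fls_pos_part s X) * fls_dp s (Y - fls_pos_part s Y)) $$ (- s) = 0"
proof (rule fls_times_nth_eq_0I)
  fix i
  show "(X - fls_pos_part s X) $$ i * fls_dp s (Y - fls_pos_part s Y) $$ (- s - i) = 0"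
    using s by (auto simp: fls_pos_part_nth fls_dp_nth unit_sign_def)
qed

lemma residue_pos_part_swap:
  assumes s: "unit_sign s" and z: "(F * fls_dp s G) $$ (- s) = 0"
  shows "(F * fls_dp s (fls_pos_part s G)) $$ (- s) = (G * fls_dp s (fls_pos_part s F)) $$ (- s)"
proof -
  define Fp Fm Gp Gm where "Fp = fls_pos_part s F" "Fm = F - fls_pos_part s F" "Gp = fls_pos_part s G" "Gm = G - fls_pos_part s G"
  have F: "F = Fp + Fm" and G: "G = Gp + Gm" by (simp_all add: Fp_Fm_Gp_Gm_def)
  have r2: "(Fp * fls_dp s Gp) $$ (- s) = 0" "(Gp * fls_dp s Fp) $$ (- s) = 0"
    unfolding Fp_Fm_Gp_Gm_def by (rule residue_pos_parts[OF s])+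
  have r3: "(Fm * fls_dp s Gm) $$ (- s) = 0" unfolding Fp_Fm_Gp_Gm_def by (rule residue_nonpos_parts[OF s])
  have "0 = (F * fls_dp s G) $$ (- s)" using z by simp
  also have "\<dots> = (Fp * fls_dp s Gp) $$ (- s) + (Fp * fls_dp s Gm) $$ (- s) + (Fm * fls_dp s Gp) $$ (- s) + (Fm * fls_dp s Gm) $$ (- s)"
    by (subst F, subst G) (simp add: fls_dp_add algebra_simps)
  finally have a: "(Fm * fls_dp s Gp) $$ (- s) = - (Fp * fls_dp s Gm) $$ (- s)" using r2 r3
    by (simp add: eq_neg_iff_add_eq_0 add.commute)
  have "(F * fls_dp s (fls_pos_part s G)) $$ (- s) = (Fp * fls_dp s Gp) $$ (- s) + (Fm * fls_dp s Gp) $$ (- s)"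
    by (subst F) (simp add: Fp_Fm_Gp_Gm_def algebra_simps)
  also have "\<dots> = (Gm * fls_dp s Fp) $$ (- s)" using r2 a residue_fls_dp_antisym[OF s, of Fp Gm] by simp
  also have "\<dots> = (G * fls_dp s (fls_pos_part s F)) $$ (- s)"
    using r2 by (subst G) (simp add: Fp_Fm_Gp_Gm_def algebra_simps)
  finally show ?thesis .
qed

lemma residue_nonpos_part_swap:
  assumes s: "unit_sign s" and z: "(F * fls_dp s G) $$ (- s) = 0"
  shows "(F * fls_dp s (G - fls_pos_part s G)) $$ (- s) = (G * fls_dp s (F - fls_pos_part s F)) $$ (- s)"
proof -
  have z2: "(G * fls_dp s F) $$ (- s) = 0" using z residue_fls_dp_antisym[OF s, of G F] by simp
  have "(F * fls_dp s (G - fls_pos_part s G)) $$ (- s) = (F * fls_dp s G) $$ (- s) - (F * fls_dp s (fls_pos_part s G)) $$ (- s)"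
    by (simp add: fls_dp_diff algebra_simps)
  also have "\<dots> = (G * fls_dp s F) $$ (- s) - (G * fls_dp s (fls_pos_part s F)) $$ (- s)"
    using residue_pos_part_swap[OF s z] z z2 by simp
  also have "\<dots> = (G * fls_dp s (F - fls_pos_part s F)) $$ (- s)"
    by (simp add: fls_dp_diff algebra_simps)
  finally show ?thesis .
qed

definition ser_residue_dp :: "ser \<Rightarrow> ser \<Rightarrow> complex" where
  "ser_residue_dp A B = ser_mult A (ser_dp B) (-1)"

lemma ser_residue_dp_fls: assumes "unit_sign s" "ser_bdd s A" "ser_bdd s B"
  shows "ser_residue_dp A B = (fls_of_ser s A * fls_dp s (fls_of_ser s B)) $$ (- s)"
proof -
  have "ser_residue_dp A B = ser_mult A (ser_dp B) (s * (- s))"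
    using assms(1) by (auto simp: ser_residue_dp_def unit_sign_def)
  also have "\<dots> = (fls_of_ser s A * fls_of_ser s (ser_dp B)) $$ (- s)"
    by (rule ser_mult_eq_fls_times_nth[OF assms(1,2) fls_of_ser_dp(1)[OF assms(1,3)]])
  finally show ?thesis using fls_of_ser_dp(2)[OF assms(1,3)] by simp
qed

lemma vanishes_below_power: "vanishes_below a F \<Longrightarrow> vanishes_below (int n * a) (F ^ n)"
  using unif_vanishes_below_power[of a "\<lambda>_. F" n] by (simp add: unif_vanishes_below_def)

section \<open>Derivatives of the coefficients of \<open>M\<close>\<close>

text \<open>Let the \<open>\<delta>\<close>'s be the errors in \<open>N\<^sub>q \<approx> Z\<^sub>q + W l\<^sub>q\<close>, \<open>N\<^sub>z \<approx> Z\<^sub>z + W l\<^sub>z\<close>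
  and \<open>N\<^sub>p \<approx> W l\<^sub>p\<close> (subscripts are derivatives). With the Lax equations \<open>E1\<close>, \<open>E2\<close>
  and \<open>{l, N} = 1\<close> one gets
  \<open>l\<^sub>p Z\<^sub>q - h\<^sub>p = l\<^sub>p (- \<delta>\<^sub>1 + h\<^sub>p \<delta>\<^sub>2 - h\<^sub>z \<delta>\<^sub>4) - h\<^sub>p (l\<^sub>p \<delta>\<^sub>2 - l\<^sub>z \<delta>\<^sub>4)\<close>,
  whose order is too high to contribute to the residue against \<open>l\<^sup>m\<close>.\<close>
lemma canonical_pair_residue_identity:
  fixes l lq lz hp hz Nq Nz N Zq Zz W :: "complex fls"
  assumes s: "unit_sign s"
    and E1: "lq = hp * lz - hz * fls_dp s l"
    and E2: "Nq = hp * Nz - hz * fls_dp s N"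
    and E3: "fls_dp s l * Nz - lz * fls_dp s N = 1"
    and d1: "vanishes_below T (Nq - (Zq + W * lq))"
    and d2: "vanishes_below T (Nz - (Zz + W * lz))"
    and d4: "vanishes_below (T - 1) (fls_dp s N - W * fls_dp s l)"
    and ll: "vanishes_below (-1) l"
    and bh: "vanishes_below cH hp" "vanishes_below cH hz" "vanishes_below cH lz" "vanishes_below cH (fls_dp s l)" "cH \<le> 0"
    and T: "T > int m + 2 - 2 * cH"
  shows "(l ^ m * (fls_dp s l * Zq)) $$ (- s) = (l ^ m * hp) $$ (- s)"
proof -
  define \<delta>1 where "\<delta>1 = Nq - (Zq + W * lq)"
  define \<delta>2 where "\<delta>2 = Nz - (Zz + W * lz)"
  define \<delta>4 where "\<delta>4 = fls_dp s N - W * fls_dp s l"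
  define U where "U = cH + T - 1"
  have a1: "vanishes_below U (- \<delta>1)" using vanishes_below_uminus[OF vanishes_below_mono[OF d1, of U]] bh(5) unfolding \<delta>1_def U_def by simp
  have a2: "vanishes_below U (hp * \<delta>2)" using vanishes_below_times[OF bh(1) vanishes_below_mono[OF d2, of "T - 1"]] unfolding \<delta>2_def U_def
    by (simp add: algebra_simps)
  have a3: "vanishes_below U (hz * \<delta>4)" using vanishes_below_times[OF bh(2) d4] unfolding \<delta>4_def U_def
    by (simp add: algebra_simps)
  have e1: "vanishes_below U (- \<delta>1 + hp * \<delta>2 - hz * \<delta>4)"
    using vanishes_below_diff[OF vanishes_below_add[OF a1 a2] a3] by simp
  have b1: "vanishes_below U (fls_dp s l * \<delta>2)" using vanishes_below_times[OF bh(4) vanishes_below_mono[OF d2, of "T - 1"]] unfolding \<delta>2_def U_def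
    by (simp add: algebra_simps)
  have b2: "vanishes_below U (lz * \<delta>4)" using vanishes_below_times[OF bh(3) d4] unfolding \<delta>4_def U_def
    by (simp add: algebra_simps)
  have e2: "vanishes_below U (fls_dp s l * \<delta>2 - lz * \<delta>4)" using vanishes_below_diff[OF b1 b2] by simp
  define E where "E = fls_dp s l * (- \<delta>1 + hp * \<delta>2 - hz * \<delta>4) - hp * (fls_dp s l * \<delta>2 - lz * \<delta>4)"
  have lE: "vanishes_below (cH + U) E"
    using vanishes_below_diff[OF vanishes_below_times[OF bh(4) e1] vanishes_below_times[OF bh(1) e2]] unfolding E_def by simp
  have x1: "- \<delta>1 + hp * \<delta>2 - hz * \<delta>4 = (Zq - hp * Zz) + (hp * Nz - hz * fls_dp s N - Nq)
       + W * (lq - (hp * lz - hz * fls_dp s l))"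
    unfolding \<delta>1_def \<delta>2_def \<delta>4_def by (simp add: algebra_simps)
  have x2: "fls_dp s l * \<delta>2 - lz * \<delta>4 = (fls_dp s l * Nz - lz * fls_dp s N) - fls_dp s l * Zz"
    unfolding \<delta>2_def \<delta>4_def by (simp add: algebra_simps)
  have "E = fls_dp s l * (Zq - hp * Zz) - hp * (1 - fls_dp s l * Zz)"
    unfolding E_def x1 x2 using E1 E2 E3 by simp
  also have "\<dots> = fls_dp s l * Zq - hp" by (simp add: algebra_simps)
  finally have Eeq: "E = fls_dp s l * Zq - hp" .
  have lm: "vanishes_below (int m * (-1)) (l ^ m)" by (rule vanishes_below_power[OF ll])
  have "vanishes_below (int m * (-1) + (cH + U)) (l ^ m * E)" by (rule vanishes_below_times[OF lm lE])
  moreover have "- s < int m * (-1) + (cH + U)" using T s by (auto simp: U_def unit_sign_def)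
  ultimately have "(l ^ m * E) $$ (- s) = 0" by (auto simp: vanishes_below_def)
  thus ?thesis unfolding Eeq by (simp add: algebra_simps)
qed

definition line_bdd :: "int \<Rightarrow> nat \<times> nat \<Rightarrow> times \<Rightarrow> fam \<Rightarrow> bool" where
  "line_bdd s q t K \<longleftrightarrow> (\<exists>N. \<forall>s' j. s * j < N \<longrightarrow> K (t(q := s')) j = 0)"

lemma line_bdd_at: "line_bdd s q t K \<Longrightarrow> ser_bdd s (K (t(q := s')))"
  by (auto simp: line_bdd_def ser_bdd_def)

lemma line_bdd_at_base: "line_bdd s q t K \<Longrightarrow> ser_bdd s (K t)"
  using line_bdd_at[of s q t K "t q"] by simp

lemma fam_pdt_fls: assumes "unit_sign s" "line_bdd s q t K"
  shows "ser_bdd s (fam_pdt q K t)"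
    "\<And>n. fls_of_ser s (fam_pdt q K t) $$ n = deriv (\<lambda>s'. fls_of_ser s (K (t(q := s'))) $$ n) (t q)"
proof -
  from assms(2) obtain N where N: "\<forall>s' j. s * j < N \<longrightarrow> K (t(q := s')) j = 0" by (auto simp: line_bdd_def)
  have "\<forall>j. s * j < N \<longrightarrow> fam_pdt q K t j = 0"
  proof (intro allI impI)
    fix j assume "s * j < N"
    hence "(\<lambda>s'. K (t(q := s')) j) = (\<lambda>_. 0)" using N by auto
    thus "fam_pdt q K t j = 0" by (simp add: fam_pdt_def pdt_def)
  qed
  thus b: "ser_bdd s (fam_pdt q K t)" by (auto simp: ser_bdd_def)
  fix n
  have "fls_of_ser s (fam_pdt q K t) $$ n = fam_pdt q K t (s * n)" by (rule fls_of_ser_nth[OF assms(1) b])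
  also have "\<dots> = deriv (\<lambda>s'. K (t(q := s')) (s * n)) (t q)" by (simp add: fam_pdt_def pdt_def)
  also have "(\<lambda>s'. K (t(q := s')) (s * n)) = (\<lambda>s'. fls_of_ser s (K (t(q := s'))) $$ n)"
    using fls_of_ser_nth[OF assms(1) line_bdd_at[OF assms(2)]] by simp
  finally show "fls_of_ser s (fam_pdt q K t) $$ n = deriv (\<lambda>s'. fls_of_ser s (K (t(q := s'))) $$ n) (t q)" .
qed

lemma has_fls_deriv_line: assumes "unit_sign s" "line_bdd s q t K"
    "\<forall>j. (\<lambda>s'. K (t(q := s')) j) field_differentiable at (t q)"
  shows "has_fls_deriv (\<lambda>s'. fls_of_ser s (K (t(q := s')))) (fls_of_ser s (fam_pdt q K t)) (t q)"
  unfolding has_fls_deriv_def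
proof
  fix n
  have e: "(\<lambda>s'. fls_of_ser s (K (t(q := s'))) $$ n) = (\<lambda>s'. K (t(q := s')) (s * n))"
    using fls_of_ser_nth[OF assms(1) line_bdd_at[OF assms(2)]] by simp
  have "(\<lambda>s'. fls_of_ser s (K (t(q := s'))) $$ n) field_differentiable at (t q)" unfolding e using assms(3) by blast
  thus "((\<lambda>s'. fls_of_ser s (K (t(q := s'))) $$ n) has_field_derivative fls_of_ser s (fam_pdt q K t) $$ n) (at (t q))"
    unfolding fam_pdt_fls(2)[OF assms(1,2)] by (simp add: DERIV_deriv_iff_field_differentiable)
qed

lemma fam_pdt_eqI: assumes "\<forall>j. ((\<lambda>s'. K (t(q := s')) j) has_field_derivative P j) (at (t q))"
  shows "fam_pdt q K t = P"
  using assms unfolding fam_pdt_def pdt_def by (intro ext) (simp add: DERIV_imp_deriv)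

lemma fls_of_ser_pbr: assumes "unit_sign s" "ser_bdd s (A t)" "ser_bdd s (B t)" "ser_bdd s (fam_pdt (1,0) A t)" "ser_bdd s (fam_pdt (1,0) B t)"
  shows "ser_bdd s (pbr A B t)"
    "fls_of_ser s (pbr A B t) = fls_dp s (fls_of_ser s (A t)) * fls_of_ser s (fam_pdt (1,0) B t)
      - fls_of_ser s (fam_pdt (1,0) A t) * fls_dp s (fls_of_ser s (B t))"
proof -
  have d1: "ser_bdd s (ser_dp (A t))" "fls_of_ser s (ser_dp (A t)) = fls_dp s (fls_of_ser s (A t))" using fls_of_ser_dp[OF assms(1,2)] by auto
  have d2: "ser_bdd s (ser_dp (B t))" "fls_of_ser s (ser_dp (B t)) = fls_dp s (fls_of_ser s (B t))" using fls_of_ser_dp[OF assms(1,3)] by auto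
  note m1 = fls_of_ser_mult[OF assms(1) d1(1) assms(5)]
  note m2 = fls_of_ser_mult[OF assms(1) assms(4) d2(1)]
  note sb = fls_of_ser_sub[OF assms(1) m1(1) m2(1)]
  show "ser_bdd s (pbr A B t)" using sb(1) by (simp add: pbr_def)
  show "fls_of_ser s (pbr A B t) = fls_dp s (fls_of_ser s (A t)) * fls_of_ser s (fam_pdt (1,0) B t)
      - fls_of_ser s (fam_pdt (1,0) A t) * fls_dp s (fls_of_ser s (B t))"
    using sb(2) m1(2) m2(2) d1(2) d2(2) by (simp add: pbr_def)
qed

lemma fls_of_ser_fam_pdt_lax:
  assumes s: "unit_sign s" and H: "ser_bdd s (H t)" "line_bdd s (1,0) t H" and K: "line_bdd s (1,0) t K"
    and lax: "\<forall>j. ((\<lambda>s'. K (t(q:=s')) j) has_field_derivative pbr H K t j) (at (t q))"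
  shows "fls_of_ser s (fam_pdt q K t) = fls_dp s (fls_of_ser s (H t)) * fls_of_ser s (fam_pdt (1,0) K t)
      - fls_of_ser s (fam_pdt (1,0) H t) * fls_dp s (fls_of_ser s (K t))"
  unfolding fam_pdt_eqI[OF lax]
  by (rule fls_of_ser_pbr(2)[OF s H(1) line_bdd_at_base[OF K] fam_pdt_fls(1)[OF s H(2)] fam_pdt_fls(1)[OF s K]])

text \<open>\<open>N\<close> is regarded as a function of \<open>K\<close>: along the line through \<open>t\<close> in direction \<open>t\<^sub>p\<close>
  it agrees up to order \<open>T\<close> with the finite expansion \<open>\<Sum> c\<^sub>x K\<^sup>e\<^sup>x\<close>, whose coefficients
  depend on the times.\<close>
definition expansion ::
  "int \<Rightarrow> fam \<Rightarrow> 'i set \<Rightarrow> ('i \<Rightarrow> times \<Rightarrow> complex) \<Rightarrow> ('i \<Rightarrow> int) \<Rightarrow> times \<Rightarrow> complex fls" where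
  "expansion s K S c e t = (\<Sum>x\<in>S. fls_const (c x t) * fls_of_ser s (K t) powi e x)"

definition expansion_dl ::
  "int \<Rightarrow> fam \<Rightarrow> 'i set \<Rightarrow> ('i \<Rightarrow> times \<Rightarrow> complex) \<Rightarrow> ('i \<Rightarrow> int) \<Rightarrow> times \<Rightarrow> complex fls" where
  "expansion_dl s K S c e t = (\<Sum>x\<in>S. fls_const (c x t) * (of_int (e x) * fls_of_ser s (K t) powi (e x - 1)))"

definition expands_on_line ::
  "int \<Rightarrow> nat \<times> nat \<Rightarrow> times \<Rightarrow> fam \<Rightarrow> fam \<Rightarrow> 'i set \<Rightarrow> ('i \<Rightarrow> times \<Rightarrow> complex) \<Rightarrow>
    ('i \<Rightarrow> int) \<Rightarrow> int \<Rightarrow> bool" where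
  "expands_on_line s p t K N S c e T \<longleftrightarrow>
     line_bdd s p t K \<and> line_bdd s p t N \<and>
     (\<forall>s'. vanishes_below (-1) (fls_of_ser s (K (t(p:=s')))) \<and> fls_of_ser s (K (t(p:=s'))) $$ (-1) \<noteq> 0) \<and>
     (\<forall>j. (\<lambda>s'. K (t(p:=s')) j) field_differentiable at (t p)) \<and>
     (\<forall>x\<in>S. (\<lambda>s'. c x (t(p:=s'))) field_differentiable at (t p)) \<and>
     (\<forall>s' n. n < T \<longrightarrow> fls_of_ser s (N (t(p:=s'))) $$ n = expansion s K S c e (t(p:=s')) $$ n)"

lemma fls_dp_expansion:
  assumes "fls_of_ser s (K t) \<noteq> 0"
  shows "fls_dp s (expansion s K S c e t) = expansion_dl s K S c e t * fls_dp s (fls_of_ser s (K t))"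
  unfolding expansion_def expansion_dl_def fls_dp_sum sum_distrib_right
  by (rule sum.cong) (auto simp: fls_dp_mult fls_dp_const fls_dp_power_int[OF assms] mult.assoc)

lemma has_fls_deriv_expansion_line:
  assumes s: "unit_sign s" and exp: "expands_on_line s p t K N S c e T"
  shows "has_fls_deriv (\<lambda>s'. expansion s K S c e (t(p:=s')))
           (expansion s K S (\<lambda>x. pdt p (c x)) e t + expansion_dl s K S c e t * fls_of_ser s (fam_pdt p K t)) (t p)"
proof -
  define A where "A s' = fls_of_ser s (K (t(p:=s')))" for s'
  have A0: "A (t p) = fls_of_ser s (K t)" by (simp add: A_def)
  have ulA: "unif_vanishes_below (-1) A" and nzA: "\<forall>s'. A s' $$ (-1) \<noteq> 0"
    using exp by (simp_all add: expands_on_line_def unif_vanishes_below_def A_def)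
  have "line_bdd s p t K" "\<forall>j. (\<lambda>s'. K (t(p:=s')) j) field_differentiable at (t p)"
    using exp unfolding expands_on_line_def by blast+
  then have hA: "has_fls_deriv A (fls_of_ser s (fam_pdt p K t)) (t p)"
    unfolding A_def by (rule has_fls_deriv_line[OF s])
  have "has_fls_deriv (\<lambda>s'. \<Sum>x\<in>S. fls_const (c x (t(p:=s'))) * A s' powi e x)
     (\<Sum>x\<in>S. fls_const (pdt p (c x) t) * A (t p) powi e x
        + fls_const (c x t) * (of_int (e x) * A (t p) powi (e x - 1) * fls_of_ser s (fam_pdt p K t))) (t p)"
  proof (rule has_fls_deriv_sum)
    fix x assume "x \<in> S"
    then have "((\<lambda>s'. c x (t(p:=s'))) has_field_derivative pdt p (c x) t) (at (t p))"
      using exp by (simp add: expands_on_line_def pdt_def DERIV_deriv_iff_field_differentiable)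
    from has_fls_deriv_const_times[OF this has_fls_deriv_power_int[OF ulA nzA hA]]
    show "has_fls_deriv (\<lambda>s'. fls_const (c x (t(p:=s'))) * A s' powi e x)
          (fls_const (pdt p (c x) t) * A (t p) powi e x
        + fls_const (c x t) * (of_int (e x) * A (t p) powi (e x - 1) * fls_of_ser s (fam_pdt p K t))) (t p)"
      by simp
  qed
  then show ?thesis
    unfolding A0 expansion_def expansion_dl_def sum.distrib sum_distrib_right
    by (simp add: A_def mult.assoc)
qed

lemma vanishes_below_fam_pdt_expansion:
  assumes s: "unit_sign s" and exp: "expands_on_line s p t K N S c e T"
  shows "vanishes_below T (fls_of_ser s (fam_pdt p N t)
           - (expansion s K S (\<lambda>x. pdt p (c x)) e t + expansion_dl s K S c e t * fls_of_ser s (fam_pdt p K t)))"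
  unfolding vanishes_below_def
proof (intro allI impI)
  fix n assume n: "n < T"
  have N: "line_bdd s p t N" using exp by (simp add: expands_on_line_def)
  have "fls_of_ser s (fam_pdt p N t) $$ n = deriv (\<lambda>s'. fls_of_ser s (N (t(p := s'))) $$ n) (t p)"
    by (rule fam_pdt_fls(2)[OF s N])
  also have "(\<lambda>s'. fls_of_ser s (N (t(p := s'))) $$ n) = (\<lambda>s'. expansion s K S c e (t(p:=s')) $$ n)"
    using exp n by (simp add: expands_on_line_def)
  also have "deriv \<dots> (t p)
      = (expansion s K S (\<lambda>x. pdt p (c x)) e t + expansion_dl s K S c e t * fls_of_ser s (fam_pdt p K t)) $$ n"
    by (rule has_fls_deriv_deriv_nth[OF has_fls_deriv_expansion_line[OF s exp]])
  finally show "(fls_of_ser s (fam_pdt p N t)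
           - (expansion s K S (\<lambda>x. pdt p (c x)) e t + expansion_dl s K S c e t * fls_of_ser s (fam_pdt p K t))) $$ n = 0"
    by simp
qed

lemma residue_power_fls_dp_expansion:
  assumes s: "unit_sign s" and S: "finite S"
    and l: "vanishes_below (-1) (fls_of_ser s (K t))" "fls_of_ser s (K t) $$ (-1) \<noteq> 0"
  shows "(fls_of_ser s (K t) ^ m * (fls_dp s (fls_of_ser s (K t)) * expansion s K S c e t)) $$ (- s)
       = - of_int s * (\<Sum>x\<in>{x\<in>S. e x = - int m - 1}. c x t)"
proof -
  define l where "l = fls_of_ser s (K t)"
  have lnz: "l \<noteq> 0" using l(2) by (metis l_def fls_zero_nth)
  have "l ^ m * (fls_dp s l * expansion s K S c e t)
      = (\<Sum>x\<in>S. fls_const (c x t) * (l powi (int m + e x) * fls_dp s l))"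
    unfolding expansion_def l_def[symmetric] sum_distrib_left power_int_add[of l, OF disjI1[OF lnz]]
    by (rule sum.cong) (simp_all add: algebra_simps)
  hence "(l ^ m * (fls_dp s l * expansion s K S c e t)) $$ (- s)
      = (\<Sum>x\<in>S. c x t * (if int m + e x = -1 then - of_int s else 0))"
    using residue_power_int_fls_dp[OF s l[folded l_def]] by (simp add: fls_nth_sum)
  also have "\<dots> = (\<Sum>x\<in>S. if e x = - int m - 1 then - of_int s * c x t else 0)"
    by (rule sum.cong) auto
  also have "\<dots> = (\<Sum>x\<in>{x\<in>S. e x = - int m - 1}. - of_int s * c x t)"
    by (rule sum.inter_filter[OF S, symmetric])
  also have "\<dots> = - of_int s * (\<Sum>x\<in>{x\<in>S. e x = - int m - 1}. c x t)"
    by (simp add: sum_distrib_left)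
  finally show ?thesis unfolding l_def .
qed

lemma lax_residue_identity:
  assumes s: "unit_sign s" and S: "finite S"
    and exq: "expands_on_line s q t K N S c e T" and exz: "expands_on_line s (1,0) t K N S c e T"
    and Hb: "ser_bdd s (H t)" "line_bdd s (1,0) t H" "vanishes_below cH (fls_dp s (fls_of_ser s (H t)))"
            "vanishes_below cH (fls_of_ser s (fam_pdt (1,0) H t))" "cH \<le> -2"
    and laxK: "\<forall>j. ((\<lambda>s'. K (t(q:=s')) j) has_field_derivative pbr H K t j) (at (t q))"
    and laxN: "\<forall>j. ((\<lambda>s'. N (t(q:=s')) j) has_field_derivative pbr H N t j) (at (t q))"
    and canon: "pbr K N t = ser_one"
    and T: "T > int m + 2 - 2 * cH"
  shows "- of_int s * (\<Sum>x\<in>{x\<in>S. e x = - int m - 1}. pdt q (c x) t)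
         = (fls_of_ser s (K t) ^ m * fls_dp s (fls_of_ser s (H t))) $$ (- s)"
proof -
  define l where "l = fls_of_ser s (K t)"
  define lz where "lz = fls_of_ser s (fam_pdt (1,0) K t)"
  define hp where "hp = fls_dp s (fls_of_ser s (H t))"
  define hz where "hz = fls_of_ser s (fam_pdt (1,0) H t)"
  define NN where "NN = fls_of_ser s (N t)"
  define Nz where "Nz = fls_of_ser s (fam_pdt (1,0) N t)"
  define W where "W = expansion_dl s K S c e t"
  have Kz: "line_bdd s (1,0) t K" "line_bdd s (1,0) t N"
    using exz by (simp_all add: expands_on_line_def)
  have "vanishes_below (-1) (fls_of_ser s (K (t(q:=t q)))) \<and> fls_of_ser s (K (t(q:=t q))) $$ (-1) \<noteq> 0"
    using exq unfolding expands_on_line_def by blast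
  then have Kl: "vanishes_below (-1) l" "l $$ (-1) \<noteq> 0" by (simp_all add: l_def)
  have lnz: "l \<noteq> 0" using Kl(2) by (metis fls_zero_nth)
  note d1 = vanishes_below_fam_pdt_expansion[OF s exq, folded W_def]
  note d2 = vanishes_below_fam_pdt_expansion[OF s exz, folded W_def lz_def Nz_def]
  have "\<forall>n<T. fls_of_ser s (N (t(q:=t q))) $$ n = expansion s K S c e (t(q:=t q)) $$ n"
    using exq unfolding expands_on_line_def by blast
  then have "vanishes_below T (NN - expansion s K S c e t)"
    by (simp add: vanishes_below_def NN_def)
  from vanishes_below_fls_dp[OF s this]
  have d4: "vanishes_below (T - 1) (fls_dp s NN - W * fls_dp s l)"
    unfolding fls_dp_diff fls_dp_expansion[where K=K and t=t, OF lnz[unfolded l_def]] W_def l_def .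
  have E1: "fls_of_ser s (fam_pdt q K t) = hp * lz - hz * fls_dp s l"
    unfolding fls_of_ser_fam_pdt_lax[OF s Hb(1,2) Kz(1) laxK] hp_def lz_def hz_def l_def ..
  have E2: "fls_of_ser s (fam_pdt q N t) = hp * Nz - hz * fls_dp s NN"
    unfolding fls_of_ser_fam_pdt_lax[OF s Hb(1,2) Kz(2) laxN] hp_def Nz_def hz_def NN_def ..
  have E3: "fls_dp s l * Nz - lz * fls_dp s NN = 1"
    using fls_of_ser_pbr(2)[OF s line_bdd_at_base[OF Kz(1)] line_bdd_at_base[OF Kz(2)]
        fam_pdt_fls(1)[OF s Kz(1)] fam_pdt_fls(1)[OF s Kz(2)]]
    unfolding canon fls_of_ser_one(2)[OF s] l_def Nz_def lz_def NN_def
    by simp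
  have "vanishes_below (-1) lz"
    unfolding lz_def
    by (rule has_fls_deriv_vanishes_below[OF _ has_fls_deriv_line[OF s Kz(1)]])
       (use exz in \<open>simp_all add: expands_on_line_def unif_vanishes_below_def\<close>)
  then have bh: "vanishes_below cH hp" "vanishes_below cH hz" "vanishes_below cH lz"
      "vanishes_below cH (fls_dp s l)" "cH \<le> 0"
    using Hb(3,4,5) vanishes_below_mono vanishes_below_mono[OF vanishes_below_fls_dp[OF s Kl(1)], of cH]
    unfolding hp_def hz_def by auto
  have "(l ^ m * (fls_dp s l * expansion s K S (\<lambda>x. pdt q (c x)) e t)) $$ (- s) = (l ^ m * hp) $$ (- s)"
    by (rule canonical_pair_residue_identity[OF s E1 E2 E3 d1 d2 d4 Kl(1) bh T])
  then show ?thesis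
    using residue_power_fls_dp_expansion[where K=K and t=t and m=m and c="\<lambda>x. pdt q (c x)", OF s S Kl[unfolded l_def]]
    unfolding hp_def l_def by simp
qed

definition higher_times :: "(nat \<times> nat) set" where "higher_times = {(m,n). m + n \<ge> 2}"

text \<open>\<open>M\<close> (\<open>sel = fst\<close>, \<open>b0 = (1,0)\<close>, \<open>s = -1\<close>) and \<open>Mhat\<close> (\<open>sel = snd\<close>, \<open>b0 = (0,1)\<close>,
  \<open>s = 1\<close>) at once.\<close>
definition M_series ::
  "(nat \<times> nat \<Rightarrow> nat) \<Rightarrow> nat \<times> nat \<Rightarrow> int \<Rightarrow> fam \<Rightarrow> (nat \<Rightarrow> times \<Rightarrow> complex) \<Rightarrow> fam" where
  "M_series sel b0 s K w t = ser_add
     (ser_add (ser_sum higher_times (\<lambda>x. ser_smul (of_nat (sel x) * t x) (ser_pow (K t) (sel x - 1))))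
              (ser_const (t b0)))
     (ser_sum {i. i \<ge> 1} (\<lambda>i. ser_smul (w (i + 1) t) (ser_pow (ser_inv s (K t)) (i + 1))))"

lemma Mser_eq_M_series: "Mser K v = M_series fst (1,0) (-1) K v"
  unfolding Mser_def M_series_def higher_times_def inv_up_eq by (intro ext) (simp add: case_prod_unfold)

lemma Mhser_eq_M_series: "Mhser K v = M_series snd (0,1) 1 K v"
  unfolding Mhser_def M_series_def higher_times_def inv_down_eq by (intro ext) (simp add: case_prod_unfold)

lemma ser_sum_finite_support:
  assumes "finite A" "\<And>x. x \<in> I \<Longrightarrow> x \<notin> A \<Longrightarrow> G x j = 0"
  shows "ser_sum I G j = (\<Sum>x\<in>I \<inter> A. G x j)"
proof -
  have sub: "{x. x \<in> I \<and> G x j \<noteq> 0} \<subseteq> I \<inter> A" using assms(2) by blast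
  have "ser_sum I G j = (\<Sum>x | x \<in> I \<and> G x j \<noteq> 0. G x j)" by (simp add: ser_sum_def)
  also have "\<dots> = (\<Sum>x\<in>I \<inter> A. G x j)"
    by (rule sum.mono_neutral_left) (use assms(1) sub in auto)
  finally show ?thesis .
qed

lemma ser_sum_eq_0: "(\<And>x. x \<in> I \<Longrightarrow> G x j = 0) \<Longrightarrow> ser_sum I G j = 0"
  by (simp add: ser_sum_def)

lemma fin_times_upd: "fin_times t \<Longrightarrow> q \<noteq> (0,0) \<Longrightarrow> fin_times (t(q := s))"
proof -
  assume a: "fin_times t" "q \<noteq> (0,0)"
  have "{x. (t(q := s)) x \<noteq> 0} \<subseteq> insert q {x. t x \<noteq> 0}" by auto
  moreover have "finite {x. t x \<noteq> 0}" "t (0,0) = 0" using a(1) by (auto simp: fin_times_def)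
  ultimately have "finite {x. (t(q := s)) x \<noteq> 0}" by (meson finite_insert finite_subset)
  thus ?thesis using a \<open>t (0,0) = 0\<close> by (simp add: fin_times_def)
qed

text \<open>The common shape of \<open>L\<close> (\<open>s = -1\<close>) and \<open>Lhat\<close> (\<open>s = 1\<close>): leading term \<open>p\<^sup>-\<^sup>s\<close>
  with nonzero coefficient.\<close>
definition lax_ser :: "int \<Rightarrow> fam \<Rightarrow> bool" where
  "lax_ser s K \<longleftrightarrow> (\<forall>t' j. s * j < -1 \<longrightarrow> K t' j = 0) \<and>
     (\<forall>t'. fin_times t' \<longrightarrow> K t' (- s) \<noteq> 0) \<and> (\<forall>j. regular (\<lambda>t'. K t' j))"

lemma regular_const: "regular (\<lambda>_. c)"
  by (simp add: regular_def)

lemma lax_ser_Lser: assumes "\<forall>i. regular (f i)" shows "lax_ser (-1) (Lser f)"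
  unfolding lax_ser_def
proof (intro conjI allI impI)
  fix t' j show "-1 * j < -1 \<Longrightarrow> Lser f t' j = 0" by (simp add: Lser_def)
next
  fix t' show "Lser f t' (- (-1)) \<noteq> 0" by (simp add: Lser_def)
next
  fix j
  have "(\<lambda>t'. Lser f t' j) = (if j = 1 then (\<lambda>_. 1) else if j \<le> 0 then f j else (\<lambda>_. 0))"
    by (auto simp: Lser_def)
  then show "regular (\<lambda>t'. Lser f t' j)" using assms by (simp add: regular_const)
qed

lemma lax_ser_Lhser: assumes "\<forall>i. regular (g i)" "regular u" "\<forall>t. fin_times t \<longrightarrow> u t \<noteq> 0"
  shows "lax_ser 1 (Lhser u g)"
  unfolding lax_ser_def
proof (intro conjI allI impI)
  fix t' j show "1 * j < -1 \<Longrightarrow> Lhser u g t' j = 0" by (simp add: Lhser_def)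
next
  fix t' show "fin_times t' \<Longrightarrow> Lhser u g t' (- 1) \<noteq> 0" using assms(3) by (simp add: Lhser_def)
next
  fix j
  have "(\<lambda>t'. Lhser u g t' j) = (if j = -1 then u else if j \<ge> 0 then g (nat j) else (\<lambda>_. 0))"
    by (auto simp: Lhser_def)
  then show "regular (\<lambda>t'. Lhser u g t' j)" using assms by (simp add: regular_const)
qed

lemma lax_ser_bdd: "lax_ser s K \<Longrightarrow> ser_bdd s (K t')"
  unfolding lax_ser_def ser_bdd_def by blast

lemma lax_ser_line_bdd: "lax_ser s K \<Longrightarrow> line_bdd s p t K"
  unfolding lax_ser_def line_bdd_def by blast

lemma lax_ser_vanishes_below: assumes "unit_sign s" "lax_ser s K" shows "vanishes_below (-1) (fls_of_ser s (K t'))"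
  unfolding vanishes_below_def
proof (intro allI impI)
  fix j :: int assume "j < -1"
  hence "s * (s * j) < -1" by (simp only: unit_sign_mult_cancel[OF assms(1)])
  thus "fls_of_ser s (K t') $$ j = 0" using assms(2) fls_of_ser_nth[OF assms(1) lax_ser_bdd[OF assms(2)]]
    unfolding lax_ser_def by simp
qed

lemma lax_ser_leading_nonzero: assumes "unit_sign s" "lax_ser s K" "fin_times t'" shows "fls_of_ser s (K t') $$ (-1) \<noteq> 0"
  using fls_of_ser_nth[OF assms(1) lax_ser_bdd[OF assms(2)], of t' "-1"] assms(2,3) unfolding lax_ser_def by simp

lemma lax_ser_nonzero: assumes "unit_sign s" "lax_ser s K" "fin_times t'" shows "fls_of_ser s (K t') \<noteq> 0"
  using lax_ser_leading_nonzero[OF assms] by (metis fls_zero_nth)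

lemma lax_ser_power: assumes "unit_sign s" "lax_ser s K"
  shows "ser_bdd s (ser_pow (K t') k)" "fls_of_ser s (ser_pow (K t') k) = fls_of_ser s (K t') ^ k"
    "s * j < - int k \<Longrightarrow> ser_pow (K t') k j = 0"
proof -
  note P = fls_of_ser_pow[OF assms(1) lax_ser_bdd[OF assms(2)], of t' k]
  show b: "ser_bdd s (ser_pow (K t') k)" "fls_of_ser s (ser_pow (K t') k) = fls_of_ser s (K t') ^ k" using P by auto
  assume j: "s * j < - int k"
  have "vanishes_below (int k * (-1)) (fls_of_ser s (K t') ^ k)" by (rule vanishes_below_power[OF lax_ser_vanishes_below[OF assms]])
  thus "ser_pow (K t') k j = 0" using ser_eq_fls_of_ser_nth[OF assms(1) b(1), of j] b(2) j by (simp add: vanishes_below_def)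
qed

lemma lax_ser_inverse_power: assumes "unit_sign s" "lax_ser s K" "fin_times t'"
  shows "ser_bdd s (ser_pow (ser_inv s (K t')) k)" "fls_of_ser s (ser_pow (ser_inv s (K t')) k) = inverse (fls_of_ser s (K t')) ^ k"
    "s * j < int k \<Longrightarrow> ser_pow (ser_inv s (K t')) k j = 0"
proof -
  note I = fls_of_ser_inv[OF assms(1) lax_ser_bdd[OF assms(2)] lax_ser_nonzero[OF assms]]
  note P = fls_of_ser_pow[OF assms(1) I(1), of k]
  show b: "ser_bdd s (ser_pow (ser_inv s (K t')) k)" "fls_of_ser s (ser_pow (ser_inv s (K t')) k) = inverse (fls_of_ser s (K t')) ^ k"
    using P I by auto
  assume j: "s * j < int k"
  have "vanishes_below (- (-1)) (inverse (fls_of_ser s (K t')))"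
    by (rule vanishes_below_inverse[OF lax_ser_vanishes_below[OF assms(1,2)] lax_ser_leading_nonzero[OF assms]])
  hence "vanishes_below (int k * 1) (inverse (fls_of_ser s (K t')) ^ k)" using vanishes_below_power by fastforce
  thus "ser_pow (ser_inv s (K t')) k j = 0" using ser_eq_fls_of_ser_nth[OF assms(1) b(1), of j] b(2) j by (simp add: vanishes_below_def)
qed

lemma M_series_vanishes:
  assumes s: "unit_sign s" and K: "lax_ser s K" and t: "fin_times t'" and A: "{x. t' x \<noteq> 0} \<subseteq> A"
    and Mx: "\<forall>x\<in>A. sel x \<le> Mx" and j: "s * j < - int Mx - 2"
  shows "M_series sel b0 s K w t' j = 0"
proof -
  have T1: "ser_sum higher_times (\<lambda>x. ser_smul (of_nat (sel x) * t' x) (ser_pow (K t') (sel x - 1))) j = 0"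
  proof (rule ser_sum_eq_0)
    fix x assume "x \<in> higher_times"
    show "ser_smul (of_nat (sel x) * t' x) (ser_pow (K t') (sel x - 1)) j = 0"
    proof (cases "t' x = 0")
      case True then show ?thesis by (simp add: ser_smul_def)
    next
      case False
      hence "x \<in> A" using A by auto
      hence "s * j < - int (sel x - 1)" using Mx j by force
      then show ?thesis using lax_ser_power(3)[OF s K] by (simp add: ser_smul_def)
    qed
  qed
  have T2: "ser_sum {i. i \<ge> 1} (\<lambda>i. ser_smul (w (i + 1) t') (ser_pow (ser_inv s (K t')) (i + 1))) j = 0"
  proof (rule ser_sum_eq_0)
    fix i :: nat
    have "s * j < int (i + 1)" using j by simp
    have z: "ser_pow (ser_inv s (K t')) (i + 1) j = 0" by (rule lax_ser_inverse_power(3)[OF s K t]) fact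
    show "ser_smul (w (i + 1) t') (ser_pow (ser_inv s (K t')) (i + 1)) j = 0"
      unfolding ser_smul_def z by simp
  qed
  have "j \<noteq> 0" using j by auto
  thus ?thesis unfolding M_series_def ser_add_def using T1 T2 by (simp add: ser_const_def)
qed

lemma M_series_line_bdd: assumes s: "unit_sign s" and K: "lax_ser s K" and t: "fin_times t" and p: "p \<noteq> (0,0)"
  shows "line_bdd s p t (M_series sel b0 s K w)"
proof -
  define A where "A = insert p {x. t x \<noteq> 0}"
  have fA: "finite A" using t by (simp add: A_def fin_times_def)
  define Mx where "Mx = Max (sel ` A)"
  have Mx: "\<forall>x\<in>A. sel x \<le> Mx" using fA by (simp add: Mx_def)
  have "\<forall>s' j. s * j < - int Mx - 2 \<longrightarrow> M_series sel b0 s K w (t(p := s')) j = 0"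
  proof (intro allI impI)
    fix s' j assume j: "s * j < - int Mx - 2"
    show "M_series sel b0 s K w (t(p := s')) j = 0"
      by (rule M_series_vanishes[OF s K fin_times_upd[OF t p] _ Mx j]) (auto simp: A_def)
  qed
  thus ?thesis unfolding line_bdd_def by blast
qed

text \<open>The truncated expansion of \<open>M\<close> in powers of \<open>K\<close>: \<open>Inl y\<close> indexes the term of the time \<open>t\<^sub>y\<close>,
  \<open>Inr i\<close> the term of \<open>v\<^sub>i\<^sub>+\<^sub>1\<close>.\<close>
definition M_coeff ::
  "(nat \<times> nat \<Rightarrow> nat) \<Rightarrow> (nat \<Rightarrow> times \<Rightarrow> complex) \<Rightarrow> (nat \<times> nat) + nat \<Rightarrow> times \<Rightarrow> complex" where
  "M_coeff sel w x t' = (case x of Inl y \<Rightarrow> of_nat (sel y) * t' y | Inr i \<Rightarrow> w (i + 1) t')"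

definition M_exp :: "(nat \<times> nat \<Rightarrow> nat) \<Rightarrow> (nat \<times> nat) + nat \<Rightarrow> int" where
  "M_exp sel x = (case x of Inl y \<Rightarrow> int (sel y - 1) | Inr i \<Rightarrow> - (int i + 1))"

definition M_index :: "nat \<times> nat \<Rightarrow> (nat \<times> nat) set \<Rightarrow> int \<Rightarrow> ((nat \<times> nat) + nat) set" where
  "M_index b0 A T = Inl ` (insert b0 (higher_times \<inter> A)) \<union> Inr ` {1..nat T}"

lemma finite_M_index: "finite A \<Longrightarrow> finite (M_index b0 A T)"
  by (simp add: M_index_def)

lemma sum_M_index: assumes "finite A"
  shows "(\<Sum>x\<in>M_index b0 A T. F x) = (\<Sum>y\<in>insert b0 (higher_times \<inter> A). F (Inl y)) + (\<Sum>i\<in>{1..nat T}. F (Inr i))"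
proof -
  have "(\<Sum>x\<in>M_index b0 A T. F x) = (\<Sum>x\<in>Inl ` (insert b0 (higher_times \<inter> A)). F x) + (\<Sum>x\<in>Inr ` {1..nat T}. F x)"
    unfolding M_index_def by (rule sum.union_disjoint) (use assms in auto)
  also have "(\<Sum>x\<in>Inl ` (insert b0 (higher_times \<inter> A)). F x) = (\<Sum>y\<in>insert b0 (higher_times \<inter> A). F (Inl y))"
    by (subst sum.reindex) (auto simp: comp_def)
  also have "(\<Sum>x\<in>Inr ` {1..nat T}. F x) = (\<Sum>i\<in>{1..nat T}. F (Inr i))"
    by (subst sum.reindex) (auto simp: comp_def)
  finally show ?thesis .
qed

lemma ser_sum_powers_nth:
  assumes s: "unit_sign s" and K: "lax_ser s K" and A: "{x. t' x \<noteq> 0} \<subseteq> A" "finite A"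
  shows "ser_sum higher_times (\<lambda>x. ser_smul (of_nat (sel x) * t' x) (ser_pow (K t') (sel x - 1))) (s * n)
      = (\<Sum>y\<in>higher_times \<inter> A. of_nat (sel y) * t' y * (fls_of_ser s (K t') powi int (sel y - 1)) $$ n)"
proof -
  have "ser_sum higher_times (\<lambda>x. ser_smul (of_nat (sel x) * t' x) (ser_pow (K t') (sel x - 1))) (s * n)
      = (\<Sum>y\<in>higher_times \<inter> A. ser_smul (of_nat (sel y) * t' y) (ser_pow (K t') (sel y - 1)) (s * n))"
    by (rule ser_sum_finite_support[OF A(2)]) (use A(1) in \<open>auto simp: ser_smul_def\<close>)
  also have "\<dots> = (\<Sum>y\<in>higher_times \<inter> A. of_nat (sel y) * t' y * (fls_of_ser s (K t') powi int (sel y - 1)) $$ n)"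
    using fls_of_ser_nth[OF s lax_ser_power(1)[OF s K]] lax_ser_power(2)[OF s K]
    by (simp add: ser_smul_def)
  finally show ?thesis .
qed

lemma ser_sum_inverse_powers_nth:
  assumes s: "unit_sign s" and K: "lax_ser s K" and t: "fin_times t'" and n: "n < T"
  shows "ser_sum {i. i \<ge> 1} (\<lambda>i. ser_smul (w (i + 1) t') (ser_pow (ser_inv s (K t')) (i + 1))) (s * n)
      = (\<Sum>i\<in>{1..nat T}. w (i + 1) t' * (fls_of_ser s (K t') powi (- (int i + 1))) $$ n)"
proof -
  have "ser_sum {i. i \<ge> 1} (\<lambda>i. ser_smul (w (i + 1) t') (ser_pow (ser_inv s (K t')) (i + 1))) (s * n)
      = (\<Sum>i\<in>{i. i \<ge> 1} \<inter> {1..nat T}. ser_smul (w (i + 1) t') (ser_pow (ser_inv s (K t')) (i + 1)) (s * n))"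
  proof (rule ser_sum_finite_support)
    fix i :: nat assume "i \<in> {i. i \<ge> 1}" "i \<notin> {1..nat T}"
    with n s have "s * (s * n) < int (i + 1)" by (auto simp: unit_sign_def)
    then have "ser_pow (ser_inv s (K t')) (i + 1) (s * n) = 0"
      by (rule lax_ser_inverse_power(3)[OF s K t])
    then show "ser_smul (w (i + 1) t') (ser_pow (ser_inv s (K t')) (i + 1)) (s * n) = 0"
      by (simp add: ser_smul_def)
  qed simp
  also have "{i. i \<ge> 1} \<inter> {1..nat T} = {1..nat T}" by auto
  also have "(\<Sum>i\<in>{1..nat T}. ser_smul (w (i + 1) t') (ser_pow (ser_inv s (K t')) (i + 1)) (s * n))
      = (\<Sum>i\<in>{1..nat T}. w (i + 1) t' * (fls_of_ser s (K t') powi (- (int i + 1))) $$ n)"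
  proof (rule sum.cong)
    fix i :: nat
    have "ser_pow (ser_inv s (K t')) (i + 1) (s * n) = (inverse (fls_of_ser s (K t')) ^ (i + 1)) $$ n"
      using fls_of_ser_nth[OF s lax_ser_inverse_power(1)[OF s K t]] lax_ser_inverse_power(2)[OF s K t] by metis
    also have "\<dots> = (fls_of_ser s (K t') powi (- (int i + 1))) $$ n"
      by (simp add: power_int_def nat_add_distrib del: power_Suc)
    finally show "ser_smul (w (i + 1) t') (ser_pow (ser_inv s (K t')) (i + 1)) (s * n)
        = w (i + 1) t' * (fls_of_ser s (K t') powi (- (int i + 1))) $$ n" by (simp add: ser_smul_def)
  qed simp
  finally show ?thesis .
qed

lemma fls_of_M_series_nth:
  assumes s: "unit_sign s" and K: "lax_ser s K" and t: "fin_times t'" and A: "{x. t' x \<noteq> 0} \<subseteq> A" "finite A"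
    and b0: "b0 \<notin> higher_times" "sel b0 = 1" and n: "n < T"
  shows "fls_of_ser s (M_series sel b0 s K w t') $$ n
       = expansion s K (M_index b0 A T) (M_coeff sel w) (M_exp sel) t' $$ n"
proof -
  define l where "l = fls_of_ser s (K t')"
  have "\<forall>x\<in>A. sel x \<le> Max (sel ` A)" using A(2) by simp
  then have "ser_bdd s (M_series sel b0 s K w t')"
    unfolding ser_bdd_def using M_series_vanishes[OF s K t A(1)] by blast
  then have "fls_of_ser s (M_series sel b0 s K w t') $$ n = M_series sel b0 s K w t' (s * n)"
    by (rule fls_of_ser_nth[OF s])
  also have "\<dots> = ser_sum higher_times (\<lambda>x. ser_smul (of_nat (sel x) * t' x) (ser_pow (K t') (sel x - 1))) (s * n)
      + ser_const (t' b0) (s * n)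
      + ser_sum {i. i \<ge> 1} (\<lambda>i. ser_smul (w (i + 1) t') (ser_pow (ser_inv s (K t')) (i + 1))) (s * n)"
    unfolding M_series_def ser_add_def ..
  also have "\<dots> = t' b0 * (l powi 0) $$ n
      + (\<Sum>y\<in>higher_times \<inter> A. of_nat (sel y) * t' y * (l powi int (sel y - 1)) $$ n)
      + (\<Sum>i\<in>{1..nat T}. w (i + 1) t' * (l powi (- (int i + 1))) $$ n)"
    using s unfolding ser_sum_powers_nth[OF s K A] ser_sum_inverse_powers_nth[OF s K t n] l_def
    by (auto simp: ser_const_def unit_sign_def)
  also have "\<dots> = expansion s K (M_index b0 A T) (M_coeff sel w) (M_exp sel) t' $$ n"
    using b0 A(2)
    by (simp add: expansion_def fls_nth_sum sum_M_index M_coeff_def M_exp_def l_def sum.insert)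
  finally show ?thesis .
qed

lemma finite_support_bounds:
  assumes s: "unit_sign s" and H: "\<forall>t' j. int B < \<bar>j\<bar> \<longrightarrow> H t' j = 0"
  shows "ser_bdd s (H t)" "line_bdd s p t H" "vanishes_below (- int B - 2) (fls_dp s (fls_of_ser s (H t)))"
    "vanishes_below (- int B - 2) (fls_of_ser s (fam_pdt p H t))"
proof -
  have u: "line_bdd s p t H" unfolding line_bdd_def
  proof (intro exI allI impI)
    fix s' j assume "s * j < - int B"
    hence "int B < \<bar>j\<bar>" using s by (auto simp: unit_sign_def)
    thus "H (t(p := s')) j = 0" using H by blast
  qed
  show "line_bdd s p t H" by (rule u)
  show b: "ser_bdd s (H t)" by (rule line_bdd_at_base[OF u])
  have l0: "vanishes_below (- int B) (fls_of_ser s (H t))" unfolding vanishes_below_def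
  proof (intro allI impI)
    fix n :: int assume "n < - int B"
    hence "int B < \<bar>s * n\<bar>" using s by (auto simp: unit_sign_def)
    thus "fls_of_ser s (H t) $$ n = 0" using H fls_of_ser_nth[OF s b] by simp
  qed
  show "vanishes_below (- int B - 2) (fls_dp s (fls_of_ser s (H t)))" using vanishes_below_fls_dp[OF s l0] by (rule vanishes_below_mono) simp
  have "vanishes_below (- int B) (fls_of_ser s (fam_pdt p H t))" unfolding vanishes_below_def
  proof (intro allI impI)
    fix n :: int assume "n < - int B"
    hence "int B < \<bar>s * n\<bar>" using s by (auto simp: unit_sign_def)
    hence "(\<lambda>s'. fls_of_ser s (H (t(p := s'))) $$ n) = (\<lambda>_. 0)"
      using H fls_of_ser_nth[OF s line_bdd_at[OF u]] by simp
    thus "fls_of_ser s (fam_pdt p H t) $$ n = 0" unfolding fam_pdt_fls(2)[OF s u] by simp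
  qed
  thus "vanishes_below (- int B - 2) (fls_of_ser s (fam_pdt p H t))" by (rule vanishes_below_mono) simp
qed

lemma M_coeff_differentiable:
  assumes w: "\<forall>i. regular (w i)" and t: "fin_times t" and p: "fst p + snd p \<ge> 1"
  shows "(\<lambda>s'. M_coeff sel w x (t(p:=s'))) field_differentiable at (t p)"
proof (cases x)
  case (Inl y)
  have "(\<lambda>s'. M_coeff sel w x (t(p:=s'))) = (\<lambda>s'. of_nat (sel y) * (if y = p then s' else t y))"
    by (auto simp: M_coeff_def Inl)
  then show ?thesis by (cases "y = p") (auto intro!: derivative_intros)
next
  case (Inr i)
  have "(\<lambda>s'. M_coeff sel w x (t(p:=s'))) = (\<lambda>s'. w (i + 1) (t(p:=s')))" by (auto simp: M_coeff_def Inr)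
  then show ?thesis using w t p unfolding regular_def by (metis prod.collapse)
qed

lemma M_series_expands_on_line:
  assumes s: "unit_sign s" and K: "lax_ser s K" and t: "fin_times t" and w: "\<forall>i. regular (w i)"
    and b0: "b0 \<notin> higher_times" "sel b0 = 1" and p: "fst p + snd p \<ge> 1"
    and A: "finite A" "{x. t x \<noteq> 0} \<subseteq> A" "p \<in> A"
  shows "expands_on_line s p t K (M_series sel b0 s K w) (M_index b0 A T) (M_coeff sel w) (M_exp sel) T"
proof -
  have p0: "p \<noteq> (0,0)" using p by auto
  have "fls_of_ser s (M_series sel b0 s K w (t(p:=s'))) $$ n
      = expansion s K (M_index b0 A T) (M_coeff sel w) (M_exp sel) (t(p:=s')) $$ n" if "n < T" for s' n
    by (rule fls_of_M_series_nth[where sel=sel and w=w, OF s K fin_times_upd[OF t p0] _ A(1) b0 that]) (use A in auto)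
  moreover have "\<forall>j. (\<lambda>s'. K (t(p:=s')) j) field_differentiable at (t p)"
    using K t p unfolding lax_ser_def regular_def by blast
  ultimately show ?thesis
    using lax_ser_vanishes_below[OF s K] lax_ser_leading_nonzero[OF s K fin_times_upd[OF t p0]]
      lax_ser_line_bdd[OF K] M_series_line_bdd[OF s K t p0] M_coeff_differentiable[OF w t p]
    by (simp add: expands_on_line_def)
qed

lemma M_index_exp_eq:
  assumes "Inr m \<in> M_index b0 A T"
  shows "{x\<in>M_index b0 A T. M_exp sel x = - int m - 1} = {Inr m}"
  by (rule set_eqI, case_tac x) (use assms in \<open>auto simp: M_exp_def\<close>)

lemma pdt_coeff_eq_residue:
  assumes s: "unit_sign s" and K: "lax_ser s K" and t: "fin_times t" and ab: "a + b \<ge> 1"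
    and H: "\<forall>t' j. int B < \<bar>j\<bar> \<longrightarrow> H t' j = 0"
    and b0: "b0 \<in> {(1,0),(0,1)}" "sel b0 = 1"
    and w: "\<forall>i. regular (w i)"
    and laxK: "lax_eq H K a b" and laxN: "lax_eq H (M_series sel b0 s K w) a b"
    and canon: "\<forall>t. fin_times t \<longrightarrow> pbr K (M_series sel b0 s K w) t = ser_one"
    and m: "m \<ge> 1"
  shows "pdt (a,b) (w (m+1)) t = - of_int s * ser_residue_dp (ser_pow (K t) m) (H t)"
proof -
  define A where "A = insert (a,b) (insert (1,0) {x. t x \<noteq> 0})"
  define T :: int where "T = 3 * int m + 4 * int B + 7"
  have A: "finite A" "{x. t x \<noteq> 0} \<subseteq> A" using t by (auto simp: A_def fin_times_def)
  have b0': "b0 \<notin> higher_times" using b0 by (auto simp: higher_times_def)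
  have exp: "expands_on_line s p t K (M_series sel b0 s K w) (M_index b0 A T) (M_coeff sel w) (M_exp sel) T"
    if "p \<in> {(a,b), (1,0)}" for p
    by (rule M_series_expands_on_line[where sel=sel, OF s K t w b0' b0(2) _ A]) (use ab that in \<open>auto simp: A_def\<close>)
  have HW: "ser_bdd s (H t)" "line_bdd s (1,0) t H" "vanishes_below (- int B - 2) (fls_dp s (fls_of_ser s (H t)))"
    "vanishes_below (- int B - 2) (fls_of_ser s (fam_pdt (1,0) H t))"
    by (rule finite_support_bounds[OF s H])+
  have "- of_int s * (\<Sum>x\<in>{x\<in>M_index b0 A T. M_exp sel x = - int m - 1}. pdt (a,b) (M_coeff sel w x) t)
         = (fls_of_ser s (K t) ^ m * fls_dp s (fls_of_ser s (H t))) $$ (- s)"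
    by (rule lax_residue_identity[OF s finite_M_index[OF A(1)] exp exp HW])
       (use ab laxK laxN canon t in \<open>auto simp: A_def lax_eq_def T_def\<close>)
  moreover have "Inr m \<in> M_index b0 A T" using m by (auto simp: M_index_def T_def)
  moreover have "M_coeff sel w (Inr m) = w (m + 1)" by (rule ext) (simp add: M_coeff_def)
  moreover have "(fls_of_ser s (K t) ^ m * fls_dp s (fls_of_ser s (H t))) $$ (- s)
      = ser_residue_dp (ser_pow (K t) m) (H t)"
    using ser_residue_dp_fls[OF s lax_ser_power(1)[OF s K] HW(1)] lax_ser_power(2)[OF s K] by simp
  ultimately have "- of_int s * pdt (a,b) (w (m + 1)) t = ser_residue_dp (ser_pow (K t) m) (H t)"
    by (simp add: M_index_exp_eq)
  moreover have "of_int s * of_int s = (1 :: complex)" using s by (auto simp: unit_sign_def)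
  ultimately show ?thesis by (metis minus_mult_minus mult.assoc mult_1)
qed

section \<open>Symmetry\<close>

lemma ser_bdd_finite_support: assumes "unit_sign s" "\<forall>j. int B < \<bar>j\<bar> \<longrightarrow> A j = 0" shows "ser_bdd s A"
  unfolding ser_bdd_def
proof (intro exI allI impI)
  fix j assume "s * j < - int B"
  hence "int B < \<bar>j\<bar>" using assms(1) by (auto simp: unit_sign_def)
  thus "A j = 0" using assms(2) by blast
qed

lemma ser_residue_dp_add: assumes "unit_sign s" "ser_bdd s A" "ser_bdd s P" "ser_bdd s Q"
  shows "ser_residue_dp A (ser_add P Q) = ser_residue_dp A P + ser_residue_dp A Q"
  using ser_residue_dp_fls[OF assms(1,2) fls_of_ser_add(1)[OF assms(1,3,4)]] ser_residue_dp_fls[OF assms(1,2,3)] ser_residue_dp_fls[OF assms(1,2,4)]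
    fls_of_ser_add(2)[OF assms(1,3,4)] by (simp add: fls_dp_add distrib_left)

lemma residue_power_fls_dp_power: assumes s: "unit_sign s" and K: "lax_ser s K" and t: "fin_times t'" and mk: "m + k > 0"
  shows "(fls_of_ser s (K t') ^ m * fls_dp s (fls_of_ser s (K t') ^ k)) $$ (- s) = 0"
proof -
  define l where "l = fls_of_ser s (K t')"
  have ll: "vanishes_below (-1) l" unfolding l_def by (rule lax_ser_vanishes_below[OF s K])
  have ln: "l $$ (-1) \<noteq> 0" unfolding l_def by (rule lax_ser_leading_nonzero[OF s K t])
  show ?thesis
  proof (cases "k = 0")
    case True then show ?thesis using fls_dp_const[of s 1] by (simp add: fls_const_1)
  next
    case False
    have "l ^ m * fls_dp s (l ^ k) = fls_const (of_nat k) * (l ^ (m + k - 1) * fls_dp s l)"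
      using False by (simp add: fls_dp_power fls_of_nat power_add[symmetric] algebra_simps)
    moreover
    have "(l powi int (m + k - 1) * fls_dp s l) $$ (- s) = (if int (m + k - 1) = -1 then - of_int s else 0)"
      by (rule residue_power_int_fls_dp[OF s ll ln])
    hence "(l ^ (m + k - 1) * fls_dp s l) $$ (- s) = 0" unfolding power_int_of_nat by simp
    ultimately show ?thesis unfolding l_def[symmetric] by simp
  qed
qed

lemma pos_part_power_support: assumes "lax_ser (-1) K"
  shows "\<forall>j. int k < \<bar>j\<bar> \<longrightarrow> pos_part (ser_pow (K t') k) j = 0"
proof (intro allI impI)
  fix j :: int assume j: "int k < \<bar>j\<bar>"
  show "pos_part (ser_pow (K t') k) j = 0"
  proof (cases "j > 0")
    case True
    hence "(-1) * j < - int k" using j by simp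
    then show ?thesis using lax_ser_power(3)[OF _ assms] by (simp add: pos_part_def unit_sign_def)
  qed (simp add: pos_part_def)
qed

lemma nonpos_part_power_support: assumes "lax_ser 1 K"
  shows "\<forall>j. int k < \<bar>j\<bar> \<longrightarrow> nonpos_part (ser_pow (K t') k) j = 0"
proof (intro allI impI)
  fix j :: int assume j: "int k < \<bar>j\<bar>"
  show "nonpos_part (ser_pow (K t') k) j = 0"
  proof (cases "j \<le> 0")
    case True
    hence "1 * j < - int k" using j by simp
    then show ?thesis using lax_ser_power(3)[OF _ assms] by (simp add: nonpos_part_def unit_sign_def)
  qed (simp add: nonpos_part_def)
qed

lemma ser_residue_dp_pos_part_sym:
  assumes s: "unit_sign s" and K: "lax_ser s K" and t: "fin_times t" and mk: "m + k > 0"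
  shows "ser_residue_dp (ser_pow (K t) m) (pos_part (ser_pow (K t) k))
       = ser_residue_dp (ser_pow (K t) k) (pos_part (ser_pow (K t) m))"
proof -
  note pm = lax_ser_power[OF s K, where t'=t and k=m] and pk = lax_ser_power[OF s K, where t'=t and k=k]
  have "ser_residue_dp (ser_pow (K t) m) (pos_part (ser_pow (K t) k))
      = (fls_of_ser s (K t) ^ m * fls_dp s (fls_pos_part s (fls_of_ser s (K t) ^ k))) $$ (- s)"
    using ser_residue_dp_fls[OF s pm(1) fls_of_ser_pos_part(1)[OF s pk(1)]] fls_of_ser_pos_part(2)[OF s pk(1)] pm(2) pk(2) by simp
  also have "\<dots> = (fls_of_ser s (K t) ^ k * fls_dp s (fls_pos_part s (fls_of_ser s (K t) ^ m))) $$ (- s)"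
    by (rule residue_pos_part_swap[OF s residue_power_fls_dp_power[OF s K t]]) (use mk in simp)
  also have "\<dots> = ser_residue_dp (ser_pow (K t) k) (pos_part (ser_pow (K t) m))"
    using ser_residue_dp_fls[OF s pk(1) fls_of_ser_pos_part(1)[OF s pm(1)]] fls_of_ser_pos_part(2)[OF s pm(1)] pm(2) pk(2) by simp
  finally show ?thesis .
qed

lemma ser_residue_dp_nonpos_part_sym:
  assumes s: "unit_sign s" and K: "lax_ser s K" and t: "fin_times t" and mk: "m + k > 0"
  shows "ser_residue_dp (ser_pow (K t) m) (nonpos_part (ser_pow (K t) k))
       = ser_residue_dp (ser_pow (K t) k) (nonpos_part (ser_pow (K t) m))"
proof -
  note pm = lax_ser_power[OF s K, where t'=t and k=m] and pk = lax_ser_power[OF s K, where t'=t and k=k]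
  have "ser_residue_dp (ser_pow (K t) m) (nonpos_part (ser_pow (K t) k))
      = (fls_of_ser s (K t) ^ m * fls_dp s (fls_of_ser s (K t) ^ k - fls_pos_part s (fls_of_ser s (K t) ^ k))) $$ (- s)"
    using ser_residue_dp_fls[OF s pm(1) fls_of_ser_nonpos_part(1)[OF s pk(1)]] fls_of_ser_nonpos_part(2)[OF s pk(1)] pm(2) pk(2) by simp
  also have "\<dots> = (fls_of_ser s (K t) ^ k * fls_dp s (fls_of_ser s (K t) ^ m - fls_pos_part s (fls_of_ser s (K t) ^ m))) $$ (- s)"
    by (rule residue_nonpos_part_swap[OF s residue_power_fls_dp_power[OF s K t]]) (use mk in simp)
  also have "\<dots> = ser_residue_dp (ser_pow (K t) k) (nonpos_part (ser_pow (K t) m))"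
    using ser_residue_dp_fls[OF s pk(1) fls_of_ser_nonpos_part(1)[OF s pm(1)]] fls_of_ser_nonpos_part(2)[OF s pm(1)] pm(2) pk(2) by simp
  finally show ?thesis .
qed

lemma ser_residue_dp_nonpos_part_left:
  assumes B: "ser_bdd 1 B" and P: "\<forall>j. int k < \<bar>j\<bar> \<longrightarrow> P j = 0" "\<forall>j\<le>0. P j = 0"
  shows "ser_residue_dp (nonpos_part B) P = ser_residue_dp B P"
proof -
  have sg: "unit_sign 1" by (simp add: unit_sign_def)
  have bP: "ser_bdd 1 P" by (rule ser_bdd_finite_support[OF sg P(1)])
  define G where "G = fls_of_ser 1 B"
  have tP: "fls_pos_part 1 (fls_of_ser 1 P) = fls_of_ser 1 P"
    by (rule fls_eqI) (use P(2) fls_of_ser_nth[OF sg bP] in \<open>auto simp: fls_pos_part_nth\<close>)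
  have "(fls_pos_part 1 G * fls_dp 1 (fls_pos_part 1 (fls_of_ser 1 P))) $$ (- 1) = 0"
    by (rule residue_pos_parts[OF sg])
  then have "(G * fls_dp 1 (fls_of_ser 1 P)) $$ (- 1) = ((G - fls_pos_part 1 G) * fls_dp 1 (fls_of_ser 1 P)) $$ (- 1)"
    unfolding tP by (simp add: algebra_simps)
  then show ?thesis
    using ser_residue_dp_fls[OF sg B bP] ser_residue_dp_fls[OF sg fls_of_ser_nonpos_part(1)[OF sg B] bP]
    unfolding fls_of_ser_nonpos_part(2)[OF sg B] G_def by simp
qed

lemma ser_residue_dp_pos_part_swap:
  assumes A: "ser_bdd (-1) A" and Q: "\<forall>j. int k < \<bar>j\<bar> \<longrightarrow> Q j = 0" "\<forall>j>0. Q j = 0"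
  shows "ser_residue_dp A Q = - ser_residue_dp Q (pos_part A)"
proof -
  have sg: "unit_sign (-1)" by (simp add: unit_sign_def)
  have bQ: "ser_bdd (-1) Q" by (rule ser_bdd_finite_support[OF sg Q(1)])
  define F where "F = fls_of_ser (-1) A"
  define G where "G = fls_of_ser (-1) Q"
  have tQ: "fls_pos_part (-1) G = 0"
    by (rule fls_eqI) (use Q(2) fls_of_ser_nth[OF sg bQ] in \<open>auto simp: G_def fls_pos_part_nth\<close>)
  have "((F - fls_pos_part (-1) F) * fls_dp (-1) (G - fls_pos_part (-1) G)) $$ (- (-1)) = 0"
    by (rule residue_nonpos_parts[OF sg])
  then have "(F * fls_dp (-1) G) $$ 1 = (fls_pos_part (-1) F * fls_dp (-1) G) $$ 1"
    unfolding tQ by (simp add: algebra_simps)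
  also have "\<dots> = - (G * fls_dp (-1) (fls_pos_part (-1) F)) $$ 1"
    using residue_fls_dp_antisym[OF sg, of "fls_pos_part (-1) F" G] by simp
  finally show ?thesis
    using ser_residue_dp_fls[OF sg A bQ] ser_residue_dp_fls[OF sg bQ fls_of_ser_pos_part(1)[OF sg A]]
    unfolding fls_of_ser_pos_part(2)[OF sg A] F_def G_def by simp
qed

lemma ser_residue_dp_mixed_antisym:
  assumes L: "lax_ser (-1) L" and Lh: "lax_ser 1 Lh"
  shows "ser_residue_dp (ser_pow (L t) m) (nonpos_part (ser_pow (Lh t) l))
       = - ser_residue_dp (ser_pow (Lh t) l) (pos_part (ser_pow (L t) m))"
proof -
  have sg: "unit_sign (-1)" "unit_sign 1" by (auto simp: unit_sign_def)
  have "ser_residue_dp (ser_pow (L t) m) (nonpos_part (ser_pow (Lh t) l))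
      = - ser_residue_dp (nonpos_part (ser_pow (Lh t) l)) (pos_part (ser_pow (L t) m))"
    by (rule ser_residue_dp_pos_part_swap[OF lax_ser_power(1)[OF sg(1) L] nonpos_part_power_support[OF Lh]])
       (simp add: nonpos_part_def)
  also have "\<dots> = - ser_residue_dp (ser_pow (Lh t) l) (pos_part (ser_pow (L t) m))"
    by (subst ser_residue_dp_nonpos_part_left[OF lax_ser_power(1)[OF sg(2) Lh] pos_part_power_support[OF L]])
       (simp_all add: pos_part_def)
  finally show ?thesis .
qed

lemma Hser_support:
  assumes "lax_ser (-1) L" "lax_ser 1 Lh" "int (a + b) < \<bar>j\<bar>"
  shows "Hser L Lh a b t' j = 0"
  using pos_part_power_support[OF assms(1), of a t'] nonpos_part_power_support[OF assms(2), of b t'] assms(3)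
  by (simp add: Hser_def ser_add_def)

lemma ser_residue_dp_Hser:
  assumes s: "unit_sign s" "ser_bdd s A" and L: "lax_ser (-1) L" and Lh: "lax_ser 1 Lh"
  shows "ser_residue_dp A (Hser L Lh k l t)
       = ser_residue_dp A (pos_part (ser_pow (L t) k)) + ser_residue_dp A (nonpos_part (ser_pow (Lh t) l))"
  unfolding Hser_def
  by (rule ser_residue_dp_add[OF s ser_bdd_finite_support[OF s(1) pos_part_power_support[OF L]]
        ser_bdd_finite_support[OF s(1) nonpos_part_power_support[OF Lh]]])

lemma ser_residue_dp_Hser_sym:
  assumes L: "lax_ser (-1) L" and Lh: "lax_ser 1 Lh" and t: "fin_times t"
    and pos: "m > 0" "n > 0" "k > 0" "l > 0"
  shows "ser_residue_dp (ser_pow (L t) m) (Hser L Lh k l t) - ser_residue_dp (ser_pow (Lh t) n) (Hser L Lh k l t)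
       = ser_residue_dp (ser_pow (L t) k) (Hser L Lh m n t) - ser_residue_dp (ser_pow (Lh t) l) (Hser L Lh m n t)"
proof -
  have sg: "unit_sign (-1)" "unit_sign 1" by (auto simp: unit_sign_def)
  note HL = ser_residue_dp_Hser[OF sg(1) lax_ser_power(1)[OF sg(1) L] L Lh]
  note HLh = ser_residue_dp_Hser[OF sg(2) lax_ser_power(1)[OF sg(2) Lh] L Lh]
  show ?thesis
    unfolding HL HLh ser_residue_dp_mixed_antisym[OF L Lh]
      ser_residue_dp_pos_part_sym[OF sg(1) L t add_pos_pos[OF pos(1,3)]]
      ser_residue_dp_nonpos_part_sym[OF sg(2) Lh t add_pos_pos[OF pos(2,4)]]
    by simp
qed

lemma pdt_add:
  assumes "regular F" "regular G" "fin_times t" "fst q + snd q \<ge> 1"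
  shows "pdt q (\<lambda>t'. F t' + G t') t = pdt q F t + pdt q G t"
proof -
  have "(\<lambda>s. F (t(q := s))) field_differentiable at (t q)" "(\<lambda>s. G (t(q := s))) field_differentiable at (t q)"
    using assms unfolding regular_def by blast+
  then show ?thesis unfolding pdt_def by (rule deriv_add)
qed

theorem proposition2:
  fixes f :: "int \<Rightarrow> times \<Rightarrow> complex"
    and g :: "nat \<Rightarrow> times \<Rightarrow> complex"
    and u :: "times \<Rightarrow> complex"
    and v vh :: "nat \<Rightarrow> times \<Rightarrow> complex"
  defines "L \<equiv> Lser f"
    and "Lh \<equiv> Lhser u g"
    and "M \<equiv> Mser (Lser f) v"
    and "Mh \<equiv> Mhser (Lhser u g) vh"
  assumes reg: "\<forall>i. regular (f i)" "\<forall>i. regular (g i)" "regular u"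
               "\<forall>i. regular (v i)" "\<forall>i. regular (vh i)"
    and u_nz: "\<forall>t. fin_times t \<longrightarrow> u t \<noteq> 0"
    and lax: "\<forall>m n. m + n \<ge> 1 \<longrightarrow>
               lax_eq (Hser L Lh m n) L m n \<and> lax_eq (Hser L Lh m n) M m n \<and>
               lax_eq (Hser L Lh m n) Lh m n \<and> lax_eq (Hser L Lh m n) Mh m n"
    and canon: "\<forall>t. fin_times t \<longrightarrow> pbr L M t = ser_one \<and> pbr Lh Mh t = ser_one"
    and pos: "m > 0" "n > 0" "k > 0" "l > 0"
    and t: "fin_times t"
  shows "pdt (k,l) (\<lambda>t'. v (m + 1) t' + vh (n + 1) t') t
       = pdt (m,n) (\<lambda>t'. v (k + 1) t' + vh (l + 1) t') t"
proof -
  have sg: "unit_sign (-1)" "unit_sign 1" by (auto simp: unit_sign_def)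
  have KL: "lax_ser (-1) L" unfolding L_def by (rule lax_ser_Lser[OF reg(1)])
  have KLh: "lax_ser 1 Lh" unfolding Lh_def by (rule lax_ser_Lhser[OF reg(2,3) u_nz])
  have H: "\<forall>t' j. int (a + b) < \<bar>j\<bar> \<longrightarrow> Hser L Lh a b t' j = 0" for a b
    using Hser_support[OF KL KLh] by blast
  have D: "pdt (a,b) (\<lambda>t'. v (c + 1) t' + vh (d + 1) t') t
      = ser_residue_dp (ser_pow (L t) c) (Hser L Lh a b t) - ser_residue_dp (ser_pow (Lh t) d) (Hser L Lh a b t)"
    if ab: "a + b \<ge> 1" and "c > 0" "d > 0" for a b c d
  proof -
    have "pdt (a,b) (v (c + 1)) t = - of_int (-1) * ser_residue_dp (ser_pow (L t) c) (Hser L Lh a b t)"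
      by (rule pdt_coeff_eq_residue[OF sg(1) KL t ab H _ _ reg(4), where sel=fst and ?b0.0="(1,0)"])
         (use lax canon ab that in \<open>auto simp: M_def L_def Mser_eq_M_series\<close>)
    moreover have "pdt (a,b) (vh (d + 1)) t = - of_int 1 * ser_residue_dp (ser_pow (Lh t) d) (Hser L Lh a b t)"
      by (rule pdt_coeff_eq_residue[OF sg(2) KLh t ab H _ _ reg(5), where sel=snd and ?b0.0="(0,1)"])
         (use lax canon ab that in \<open>auto simp: Mh_def Lh_def Mhser_eq_M_series\<close>)
    ultimately show ?thesis using pdt_add[OF _ _ t, of "v (c + 1)" "vh (d + 1)" "(a,b)"] reg(4,5) ab by simp
  qed
  show ?thesis
    using D[of k l m n] D[of m n k l] ser_residue_dp_Hser_sym[OF KL KLh t pos] pos by simp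
qed

end
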